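(* Let $F$ be a maximal flan in a $3$-connected matroid $M$ with $|F|\ge 5$ and $F\ne E(M)$. Let $i\in\{1,2,3\}$, let $j$ be an odd integer with $5\le j\le |F|$, and suppose $F$ has a flan ordering $(f_1,f_2,\dots,f_{|F|})$ such that neither $f_i$ nor $f_j$ is contained in a triangle of $M$. Then (i) $M/f_i$, $M/f_j$ and $\mathrm{si}(M/f_i/f_j)$ are $3$-connected; (ii) if $j\ge 7$, then $M/f_i/f_j$ is $3$-connected; and (iii) if $|F|=5$, then $M/f_i/f_j$ is $3$-connected.
   Context: For a $3$-connected matroid $M$, a set $F\subseteq E(M)$ with $t=|F|\ge 4$ is a flan if it has an ordering $(f_1,\dots,f_t)$ (a flan ordering) such that (a) for each odd $i\in\{1,\dots,t-2\}$, $\{f_i,f_{i+1},f_{i+2}\}$ is a triad; and (b) for each even $i\in\{4,\dots,t\}$, $f_i\in\mathrm{cl}(\{f_1,\dots,f_{i-1}\})$. A flan is maximal if it is not properly contained in another flan. $\mathrm{si}(\cdot)$ denotes simplification. *)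

theory Defs
  imports Main
begin

type_synonym 'a matroid = "'a set \<times> ('a set \<Rightarrow> nat)"

definition gnd :: "'a matroid \<Rightarrow> 'a set" where "gnd M = fst M"
definition rk :: "'a matroid \<Rightarrow> 'a set \<Rightarrow> nat" where "rk M = snd M"

definition matroid :: "'a matroid \<Rightarrow> bool" where
  "matroid M \<longleftrightarrow> finite (gnd M) \<and>
     (\<forall>X. X \<subseteq> gnd M \<longrightarrow> rk M X \<le> card X) \<and>
     (\<forall>X Y. X \<subseteq> Y \<and> Y \<subseteq> gnd M \<longrightarrow> rk M X \<le> rk M Y) \<and>
     (\<forall>X Y. X \<subseteq> gnd M \<and> Y \<subseteq> gnd M \<longrightarrow>
        rk M (X \<union> Y) + rk M (X \<inter> Y) \<le> rk M X + rk M Y)"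

definition contract :: "'a matroid \<Rightarrow> 'a \<Rightarrow> 'a matroid" where
  "contract M e = (gnd M - {e}, \<lambda>X. rk M (X \<union> {e}) - rk M {e})"

definition restrict :: "'a matroid \<Rightarrow> 'a set \<Rightarrow> 'a matroid" where
  "restrict M S = (S, rk M)"

definition loop :: "'a matroid \<Rightarrow> 'a \<Rightarrow> bool" where
  "loop M e \<longleftrightarrow> e \<in> gnd M \<and> rk M {e} = 0"

definition parallel :: "'a matroid \<Rightarrow> 'a \<Rightarrow> 'a \<Rightarrow> bool" where
  "parallel M e f \<longleftrightarrow> e \<in> gnd M \<and> f \<in> gnd M \<and> \<not> loop M e \<and> \<not> loop M f
      \<and> rk M {e, f} = 1"

text \<open>Simplification: keep exactly one element of each parallel class of non-loops
  (well defined up to isomorphism; a fixed choice is taken).\<close>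
definition si :: "'a matroid \<Rightarrow> 'a matroid" where
  "si M = restrict M (SOME S. S \<subseteq> {e \<in> gnd M. \<not> loop M e} \<and>
      (\<forall>e \<in> gnd M. \<not> loop M e \<longrightarrow> (\<exists>!s \<in> S. parallel M e s)))"

definition conn :: "'a matroid \<Rightarrow> 'a set \<Rightarrow> nat" where
  "conn M X = rk M X + rk M (gnd M - X) - rk M (gnd M)"

definition separation :: "'a matroid \<Rightarrow> nat \<Rightarrow> 'a set \<Rightarrow> bool" where
  "separation M k X \<longleftrightarrow> X \<subseteq> gnd M \<and> card X \<ge> k \<and> card (gnd M - X) \<ge> k \<and> conn M X < k"

definition three_connected :: "'a matroid \<Rightarrow> bool" where
  "three_connected M \<longleftrightarrow> (\<forall>k X. k < 3 \<longrightarrow> \<not> separation M k X)"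

definition dependent :: "'a matroid \<Rightarrow> 'a set \<Rightarrow> bool" where
  "dependent M X \<longleftrightarrow> X \<subseteq> gnd M \<and> rk M X < card X"

definition circuit :: "'a matroid \<Rightarrow> 'a set \<Rightarrow> bool" where
  "circuit M C \<longleftrightarrow> dependent M C \<and> (\<forall>D. D \<subset> C \<longrightarrow> \<not> dependent M D)"

definition cocircuit :: "'a matroid \<Rightarrow> 'a set \<Rightarrow> bool" where
  "cocircuit M C \<longleftrightarrow> C \<subseteq> gnd M \<and> C \<noteq> {} \<and> rk M (gnd M - C) < rk M (gnd M) \<and>
     (\<forall>D. D \<subset> C \<and> D \<noteq> {} \<longrightarrow> rk M (gnd M - D) = rk M (gnd M))"

definition triangle :: "'a matroid \<Rightarrow> 'a set \<Rightarrow> bool" where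
  "triangle M T \<longleftrightarrow> circuit M T \<and> card T = 3"

definition triad :: "'a matroid \<Rightarrow> 'a set \<Rightarrow> bool" where
  "triad M T \<longleftrightarrow> cocircuit M T \<and> card T = 3"

definition cl :: "'a matroid \<Rightarrow> 'a set \<Rightarrow> 'a set" where
  "cl M X = {e \<in> gnd M. rk M (X \<union> {e}) = rk M X}"

text \<open>Flan ordering (f_1,...,f_t) is the list fs, with f_k = fs ! (k - 1).\<close>
definition flan_ordering :: "'a matroid \<Rightarrow> 'a set \<Rightarrow> 'a list \<Rightarrow> bool" where
  "flan_ordering M F fs \<longleftrightarrow> distinct fs \<and> set fs = F \<and> F \<subseteq> gnd M \<and> length fs \<ge> 4 \<and>
     (\<forall>k. odd k \<and> 1 \<le> k \<and> k \<le> length fs - 2 \<longrightarrow>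
         triad M {fs ! (k - 1), fs ! k, fs ! (k + 1)}) \<and>
     (\<forall>k. even k \<and> 4 \<le> k \<and> k \<le> length fs \<longrightarrow>
         fs ! (k - 1) \<in> cl M (set (take (k - 1) fs)))"

definition flan :: "'a matroid \<Rightarrow> 'a set \<Rightarrow> bool" where
  "flan M F \<longleftrightarrow> (\<exists>fs. flan_ordering M F fs)"

definition maximal_flan :: "'a matroid \<Rightarrow> 'a set \<Rightarrow> bool" where
  "maximal_flan M F \<longleftrightarrow> flan M F \<and> (\<forall>G. flan M G \<longrightarrow> \<not> F \<subset> G)"

definition in_triangle :: "'a matroid \<Rightarrow> 'a \<Rightarrow> bool" where
  "in_triangle M e \<longleftrightarrow> (\<exists>T. triangle M T \<and> e \<in> T)"

end

theory Submission
  imports Defs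
begin

text \<open>
  A 2-separation \<open>(X, Y)\<close> of \<open>M/K\<close> can be grown one element at a time: an element spanned by
  \<open>X \<union> K\<close>, or one whose move lowers \<open>r(E - X)\<close>, passes from \<open>Y\<close> to \<open>X\<close> without raising the
  connectivity, as long as \<open>Y\<close> keeps two elements. The flan ordering supplies such elements: \<open>f\<^sub>k\<close>
  with \<open>k\<close> even lies in \<open>cl(F\<^sub>k\<^sub>-\<^sub>1)\<close>, and \<open>f\<^sub>k\<close> with \<open>k\<close> odd is not spanned by the complement of
  the triad \<open>{f\<^sub>k\<^sub>-\<^sub>2, f\<^sub>k\<^sub>-\<^sub>1, f\<^sub>k}\<close>. Starting from two elements of \<open>F\<^sub>3\<close> (when contracting \<open>f\<^sub>j\<close>)
  or of \<open>F\<^sub>4 - {f\<^sub>i}\<close> (when contracting \<open>f\<^sub>i\<close> and \<open>f\<^sub>j\<close>), a side absorbs all of \<open>F\<^sub>j\<^sub>-\<^sub>1\<close> except the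
  contracted elements, so the other side misses the triad through \<open>f\<^sub>j\<close>; but a triad through a
  contracted element meets both sides of every 2-separation. When only \<open>f\<^sub>i\<close> is contracted, the
  three elements of \<open>F\<^sub>4 - {f\<^sub>i}\<close> span one another modulo \<open>f\<^sub>i\<close> because \<open>f\<^sub>i\<close> is in no triangle, and
  the first triad, which contains \<open>f\<^sub>i\<close>, plays the role of the triad through \<open>f\<^sub>j\<close>.

  Sides with two elements are excluded by the absence of triangles through \<open>f\<^sub>i\<close> and \<open>f\<^sub>j\<close> and by
  the maximality of \<open>F\<close>, which forbids \<open>f\<^sub>j \<in> cl(F\<^sub>j\<^sub>-\<^sub>1)\<close> and, for \<open>|F|\<close> odd, any element outside
  \<open>F\<close> spanned by \<open>F\<close>. For \<open>j = 5 < |F|\<close> such sides can be parallel pairs of \<open>M/f\<^sub>i/f\<^sub>j\<close>, which is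
  why then only the simplification is 3-connected.
\<close>

section \<open>Rank functions\<close>

lemma matroid_finite_gnd: "matroid M \<Longrightarrow> finite (gnd M)"
  by (simp add: matroid_def)

lemma matroid_rank_le_card: "matroid M \<Longrightarrow> X \<subseteq> gnd M \<Longrightarrow> rk M X \<le> card X"
  by (simp add: matroid_def)

lemma matroid_rank_mono: "matroid M \<Longrightarrow> X \<subseteq> Y \<Longrightarrow> Y \<subseteq> gnd M \<Longrightarrow> rk M X \<le> rk M Y"
  by (simp add: matroid_def)

lemma matroid_submodular: "matroid M \<Longrightarrow> X \<subseteq> gnd M \<Longrightarrow> Y \<subseteq> gnd M \<Longrightarrow>
    rk M (X \<union> Y) + rk M (X \<inter> Y) \<le> rk M X + rk M Y"
  by (simp add: matroid_def)

lemma matroid_rank_empty: "matroid M \<Longrightarrow> rk M {} = 0"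
  using matroid_rank_le_card[of M "{}"] by simp

lemma matroid_rank_insert_le:
  assumes "matroid M" "X \<subseteq> gnd M" "x \<in> gnd M"
  shows "rk M (insert x X) \<le> rk M X + 1"
proof -
  have "rk M (X \<union> {x}) + rk M (X \<inter> {x}) \<le> rk M X + rk M {x}"
    using matroid_submodular[OF assms(1,2), of "{x}"] assms by auto
  moreover have "rk M {x} \<le> 1" using matroid_rank_le_card[OF assms(1), of "{x}"] assms by auto
  ultimately show ?thesis by simp
qed

lemma matroid_spanned_mono:
  assumes "matroid M" "Z \<subseteq> W" "W \<subseteq> gnd M" "x \<in> gnd M" "rk M (insert x Z) = rk M Z"
  shows "rk M (insert x W) = rk M W"
proof -
  have "W \<union> insert x Z = insert x W" using assms by auto
  then have "rk M (insert x W) + rk M (W \<inter> insert x Z) \<le> rk M W + rk M (insert x Z)"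
    using matroid_submodular[OF assms(1,3), of "insert x Z"] assms by auto
  moreover have "rk M Z \<le> rk M (W \<inter> insert x Z)"
    using matroid_rank_mono[OF assms(1), of Z "W \<inter> insert x Z"] assms by auto
  moreover have "rk M W \<le> rk M (insert x W)"
    using matroid_rank_mono[OF assms(1), of W "insert x W"] assms by auto
  ultimately show ?thesis using assms(5) by linarith
qed

lemma matroid_rank_Un_spanned:
  assumes "matroid M" "X \<subseteq> gnd M" "Z \<subseteq> gnd M" "\<forall>z\<in>Z. rk M (insert z X) = rk M X"
  shows "rk M (X \<union> Z) = rk M X"
proof -
  have "finite Z" using assms matroid_finite_gnd finite_subset by blast
  then show ?thesis using assms(3,4)
  proof (induction Z rule: finite_induct)
    case empty then show ?case by simp
  next
    case (insert z Z)
    have "rk M (insert z (X \<union> Z)) = rk M (X \<union> Z)"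
      using matroid_spanned_mono[OF assms(1), of X "X \<union> Z" z] insert assms by auto
    then show ?case using insert by auto
  qed
qed

lemma matroid_rank_insert_not_spanned:
  assumes "matroid M" "Z \<subseteq> W" "W \<subseteq> gnd M" "x \<in> gnd M" "rk M (insert x W) \<noteq> rk M W"
  shows "rk M (insert x Z) = rk M Z + 1"
proof -
  have "rk M (insert x Z) \<noteq> rk M Z" using matroid_spanned_mono[OF assms(1-4)] assms(5) by blast
  moreover have "rk M Z \<le> rk M (insert x Z)"
    using matroid_rank_mono[OF assms(1), of Z "insert x Z"] assms by auto
  moreover have "rk M (insert x Z) \<le> rk M Z + 1"
    using matroid_rank_insert_le[OF assms(1), of Z x] assms by auto
  ultimately show ?thesis by linarith
qed

lemma gnd_pair [simp]: "gnd (A, f) = A" by (simp add: gnd_def)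
lemma rk_pair [simp]: "rk (A, f) = f" by (simp add: rk_def)

lemma matroid_contract:
  assumes M: "matroid M" and e: "e \<in> gnd M"
  shows "matroid (contract M e)"
proof -
  let ?r = "\<lambda>X. rk M (X \<union> {e}) - rk M {e}"
  have fin: "finite (gnd M - {e})" using matroid_finite_gnd[OF M] by simp
  have card: "?r X \<le> card X" if X: "X \<subseteq> gnd M - {e}" for X
  proof -
    have "rk M (X \<union> {e}) + rk M (X \<inter> {e}) \<le> rk M X + rk M {e}"
      by (rule matroid_submodular[OF M]) (use X e in auto)
    moreover have "X \<inter> {e} = {}" using X by auto
    moreover have "rk M X \<le> card X" by (rule matroid_rank_le_card[OF M]) (use X in auto)
    ultimately show ?thesis using matroid_rank_empty[OF M] by simp
  qed
  have mono: "?r X \<le> ?r Y" if XY: "X \<subseteq> Y" "Y \<subseteq> gnd M - {e}" for X Y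
    using matroid_rank_mono[OF M, of "X \<union> {e}" "Y \<union> {e}"] XY e by (auto intro: diff_le_mono)
  have submod: "?r (X \<union> Y) + ?r (X \<inter> Y) \<le> ?r X + ?r Y"
    if XY: "X \<subseteq> gnd M - {e}" "Y \<subseteq> gnd M - {e}" for X Y
  proof -
    have "rk M ((X \<union> {e}) \<union> (Y \<union> {e})) + rk M ((X \<union> {e}) \<inter> (Y \<union> {e}))
        \<le> rk M (X \<union> {e}) + rk M (Y \<union> {e})"
      by (rule matroid_submodular[OF M]) (use XY e in auto)
    moreover have "(X \<union> {e}) \<union> (Y \<union> {e}) = (X \<union> Y) \<union> {e}"
      "(X \<union> {e}) \<inter> (Y \<union> {e}) = (X \<inter> Y) \<union> {e}" by auto
    moreover have "rk M {e} \<le> rk M ((X \<inter> Y) \<union> {e})"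
      by (rule matroid_rank_mono[OF M]) (use XY e in auto)
    moreover have "rk M {e} \<le> rk M ((X \<union> Y) \<union> {e})"
      by (rule matroid_rank_mono[OF M]) (use XY e in auto)
    ultimately show ?thesis by simp
  qed
  show ?thesis
    unfolding matroid_def contract_def gnd_pair rk_pair using fin card mono submod by blast
qed

lemma three_connected_cong:
  assumes "gnd A = gnd B" "\<forall>X. X \<subseteq> gnd A \<longrightarrow> rk A X = rk B X" "three_connected A"
  shows "three_connected B"
  unfolding three_connected_def
proof (intro allI impI notI)
  fix k X assume k: "k < (3::nat)" and s: "separation B k X"
  have "conn A X = conn B X" using s assms(1,2) unfolding separation_def conn_def
    by (metis Diff_subset order_refl)
  then have "separation A k X" using s assms(1) unfolding separation_def by simp
  then show False using assms(3) k unfolding three_connected_def by blast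
qed

lemma two_elements_of_card_ge2:
  assumes "2 \<le> card A"
  obtains p q where "p \<in> A" "q \<in> A" "p \<noteq> q"
proof -
  have fin: "finite A" using assms by (metis card.infinite not_numeral_le_zero)
  obtain p where p: "p \<in> A" using assms by fastforce
  have "card (A - {p}) \<ge> 1" using assms p fin by simp
  then obtain q where "q \<in> A - {p}" by (metis card.empty ex_in_conv not_one_le_zero)
  then show ?thesis using that p by blast
qed

lemma card_ge2_if_not_le1:
  assumes "finite A" "A \<noteq> {}" "card A \<noteq> 1"
  shows "2 \<le> card A"
proof -
  have "card A \<noteq> 0" using assms by simp
  then show ?thesis using assms(3) by linarith
qed

lemma card_ge2_of_two:
  assumes "finite A" "x \<in> A" "y \<in> A" "x \<noteq> y"
  shows "2 \<le> card A"
  using card_mono[of A "{x, y}"] assms by auto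

section \<open>Parallel classes and simplification\<close>

lemma parallel_sym: "parallel N x y \<Longrightarrow> parallel N y x"
  unfolding parallel_def by (auto simp: insert_commute)

lemma parallel_refl:
  assumes "\<forall>x\<in>gnd N. rk N {x} = 1" "x \<in> gnd N"
  shows "parallel N x x"
  using assms unfolding parallel_def loop_def by auto

lemma parallel_trans:
  assumes N: "matroid N" and nl: "\<forall>x\<in>gnd N. rk N {x} = 1"
    and "parallel N x y" "parallel N y z"
  shows "parallel N x z"
proof -
  have xyz: "x \<in> gnd N" "y \<in> gnd N" "z \<in> gnd N" "rk N {x, y} = 1" "rk N {y, z} = 1"
    using assms(3,4) unfolding parallel_def by auto
  have "rk N ({x, y} \<union> {y, z}) + rk N ({x, y} \<inter> {y, z}) \<le> rk N {x, y} + rk N {y, z}"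
    by (rule matroid_submodular[OF N]) (use xyz in auto)
  moreover have "rk N {y} \<le> rk N ({x, y} \<inter> {y, z})"
    by (rule matroid_rank_mono[OF N]) (use xyz in auto)
  moreover have "rk N {x, z} \<le> rk N ({x, y} \<union> {y, z})"
    by (rule matroid_rank_mono[OF N]) (use xyz in auto)
  moreover have "rk N {x} \<le> rk N {x, z}" by (rule matroid_rank_mono[OF N]) (use xyz in auto)
  ultimately have "rk N {x, z} = 1" using xyz nl by auto
  then show ?thesis using assms(3,4) unfolding parallel_def by auto
qed

lemma rank_insert_parallel:
  assumes N: "matroid N" and nl: "\<forall>x\<in>gnd N. rk N {x} = 1"
    and A: "A \<subseteq> gnd N" "s \<in> A" and p: "parallel N z s"
  shows "rk N (insert z A) = rk N A"
proof -
  have zs: "z \<in> gnd N" "s \<in> gnd N" "rk N {z, s} = 1" using p unfolding parallel_def by auto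
  have "rk N (A \<union> {z, s}) + rk N (A \<inter> {z, s}) \<le> rk N A + rk N {z, s}"
    by (rule matroid_submodular[OF N]) (use A zs in auto)
  moreover have "rk N {s} \<le> rk N (A \<inter> {z, s})" by (rule matroid_rank_mono[OF N]) (use A zs in auto)
  moreover have "A \<union> {z, s} = insert z A" using A by auto
  moreover have "rk N A \<le> rk N (insert z A)" by (rule matroid_rank_mono[OF N]) (use A zs in auto)
  ultimately show ?thesis using zs nl by auto
qed

lemma rank_Un_parallel:
  assumes N: "matroid N" and nl: "\<forall>x\<in>gnd N. rk N {x} = 1"
    and AZ: "A \<subseteq> gnd N" "Z \<subseteq> gnd N" "\<forall>z\<in>Z. \<exists>s\<in>A. parallel N z s"
  shows "rk N (A \<union> Z) = rk N A"
  using AZ rank_insert_parallel[OF N nl AZ(1)] by (intro matroid_rank_Un_spanned[OF N]) blast+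

lemma si_loopless:
  assumes N: "matroid N" and nl: "\<forall>x\<in>gnd N. rk N {x} = 1"
  obtains S where "si N = (S, rk N)" "S \<subseteq> gnd N" "\<And>e. e \<in> gnd N \<Longrightarrow> \<exists>!s\<in>S. parallel N e s"
proof -
  define rep where "rep x = (SOME s. parallel N x s)" for x
  have rep: "parallel N x (rep x)" if "x \<in> gnd N" for x
    unfolding rep_def by (rule someI[of _ x]) (rule parallel_refl[OF nl that])
  have rep_eq: "rep x = rep y" if "parallel N x y" for x y
  proof -
    have "parallel N x s \<longleftrightarrow> parallel N y s" for s
      using parallel_trans[OF N nl that] parallel_trans[OF N nl parallel_sym[OF that]] by blast
    then have "parallel N x = parallel N y" by blast
    then show ?thesis unfolding rep_def by simp
  qed
  define PS where "PS S \<longleftrightarrow> S \<subseteq> {e \<in> gnd N. \<not> loop N e} \<and>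
      (\<forall>e \<in> gnd N. \<not> loop N e \<longrightarrow> (\<exists>!s \<in> S. parallel N e s))" for S
  have "PS (rep ` gnd N)"
    unfolding PS_def
  proof (intro conjI ballI impI)
    show "rep ` gnd N \<subseteq> {e \<in> gnd N. \<not> loop N e}"
      using rep nl unfolding parallel_def loop_def by fastforce
    fix e assume e: "e \<in> gnd N"
    show "\<exists>!s\<in>rep ` gnd N. parallel N e s"
    proof (rule ex1I[of _ "rep e"])
      fix s assume "s \<in> rep ` gnd N \<and> parallel N e s"
      then obtain x where x: "x \<in> gnd N" "s = rep x" "parallel N e s" by auto
      then have "parallel N e x"
        using parallel_trans[OF N nl x(3)[unfolded x(2)] parallel_sym[OF rep[OF x(1)]]] by simp
      then show "s = rep e" using rep_eq x by simp
    qed (use e rep in auto)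
  qed
  then have PS: "PS (SOME S. PS S)" by (rule someI)
  show ?thesis
  proof (rule that)
    show "si N = ((SOME S. PS S), rk N)" unfolding si_def restrict_def PS_def by simp
    show "(SOME S. PS S) \<subseteq> gnd N" using PS unfolding PS_def by auto
    fix e assume "e \<in> gnd N"
    moreover have "\<not> loop N e" using nl \<open>e \<in> gnd N\<close> unfolding loop_def by auto
    ultimately show "\<exists>!s \<in> (SOME S. PS S). parallel N e s" using PS unfolding PS_def by blast
  qed
qed

lemma rank_ge2_of_nonparallel:
  assumes N: "matroid N" and nl: "\<forall>x\<in>gnd N. rk N {x} = 1"
    and A: "A \<subseteq> gnd N" "2 \<le> card A" and np: "\<And>x y. x \<in> A \<Longrightarrow> y \<in> A \<Longrightarrow> parallel N x y \<Longrightarrow> x = y"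
  shows "2 \<le> rk N A"
proof -
  obtain x y where xy: "x \<in> A" "y \<in> A" "x \<noteq> y" using two_elements_of_card_ge2[OF A(2)] .
  have "rk N {x, y} \<noteq> 1"
    using np[OF xy(1,2)] xy A nl unfolding parallel_def loop_def by auto
  moreover have "rk N {x} \<le> rk N {x, y}" by (rule matroid_rank_mono[OF N]) (use xy A in auto)
  moreover have "rk N {x, y} \<le> rk N A" by (rule matroid_rank_mono[OF N]) (use xy A in auto)
  ultimately show ?thesis using nl xy A by force
qed

lemma parallel_closure_ranks:
  assumes N: "matroid N" and nl: "\<forall>x\<in>gnd N. rk N {x} = 1"
    and S: "S \<subseteq> gnd N" "\<And>e. e \<in> gnd N \<Longrightarrow> \<exists>!s\<in>S. parallel N e s" and X: "X \<subseteq> S"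
  defines "Xb \<equiv> {z \<in> gnd N. \<exists>s\<in>X. parallel N z s}"
  shows "X \<subseteq> Xb" "S - X \<subseteq> gnd N - Xb" "rk N Xb = rk N X"
    "rk N (gnd N - Xb) = rk N (S - X)" "rk N (gnd N) = rk N S"
proof -
  have self: "parallel N s s" if "s \<in> S" for s using parallel_refl[OF nl] S(1) that by auto
  show XXb: "X \<subseteq> Xb" unfolding Xb_def using X S(1) self by auto
  show SX: "S - X \<subseteq> gnd N - Xb"
  proof
    fix s' assume s': "s' \<in> S - X"
    have "s = s'" if "s \<in> X" "parallel N s' s" for s
      using S(2)[of s'] self[of s'] s' that X S(1) by auto
    then show "s' \<in> gnd N - Xb" using s' S(1) unfolding Xb_def by auto
  qed
  have "rk N (X \<union> Xb) = rk N X"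
    by (rule rank_Un_parallel[OF N nl]) (use X S(1) in \<open>auto simp: Xb_def\<close>)
  then show "rk N Xb = rk N X" using XXb by (simp add: Un_absorb1)
  have "\<exists>s\<in>S - X. parallel N z s" if "z \<in> gnd N - Xb" for z
    using S(2)[of z] that unfolding Xb_def by auto
  then have "rk N ((S - X) \<union> (gnd N - Xb)) = rk N (S - X)"
    by (intro rank_Un_parallel[OF N nl]) (use S(1) in auto)
  then show "rk N (gnd N - Xb) = rk N (S - X)" using SX by (simp add: Un_absorb1)
  have "\<exists>s\<in>S. parallel N z s" if "z \<in> gnd N" for z using S(2)[OF that] by blast
  then have "rk N (S \<union> gnd N) = rk N S" by (intro rank_Un_parallel[OF N nl]) (use S in auto)
  then show "rk N (gnd N) = rk N S" using S(1) by (simp add: Un_absorb1)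
qed

lemma si_three_connected:
  assumes N: "matroid N" and nl: "\<forall>x\<in>gnd N. rk N {x} = 1"
    and conn1: "\<And>X. X \<subseteq> gnd N \<Longrightarrow> X \<noteq> {} \<Longrightarrow> gnd N - X \<noteq> {} \<Longrightarrow>
      rk N (gnd N) + 1 \<le> rk N X + rk N (gnd N - X)"
    and conn2: "\<And>X. X \<subseteq> gnd N \<Longrightarrow> 2 \<le> rk N X \<Longrightarrow> 2 \<le> rk N (gnd N - X) \<Longrightarrow>
      rk N (gnd N) + 2 \<le> rk N X + rk N (gnd N - X)"
  shows "three_connected (si N)"
proof -
  obtain S where S: "si N = (S, rk N)" "S \<subseteq> gnd N" "\<And>e. e \<in> gnd N \<Longrightarrow> \<exists>!s\<in>S. parallel N e s"
    using si_loopless[OF N nl] by blast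
  have rank2: "2 \<le> rk N A" if "A \<subseteq> S" "2 \<le> card A" for A
  proof (rule rank_ge2_of_nonparallel[OF N nl _ that(2)])
    fix x y assume "x \<in> A" "y \<in> A" "parallel N x y"
    then show "x = y" using S(2,3) parallel_refl[OF nl] that(1) by blast
  qed (use S(2) that in auto)
  show ?thesis unfolding S(1) three_connected_def
  proof (intro allI impI notI)
    fix k X assume k: "k < (3::nat)" and sep: "separation (S, rk N) k X"
    then have X: "X \<subseteq> S" "k \<le> card X" "k \<le> card (S - X)" "rk N X + rk N (S - X) - rk N S < k"
      unfolding separation_def conn_def by auto
    define Xb where "Xb = {z \<in> gnd N. \<exists>s\<in>X. parallel N z s}"
    note lift = parallel_closure_ranks[OF N nl S(2,3) X(1), folded Xb_def]
    have Xb: "Xb \<subseteq> gnd N" unfolding Xb_def by auto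
    have cc: "rk N Xb + rk N (gnd N - Xb) - rk N (gnd N) < k" using X(4) lift by simp
    consider "k = 0" | "k = 1" | "k = 2" using k by linarith
    then show False
    proof cases
      case 1 then show False using cc by simp
    next
      case 2
      then have "0 < card X" "0 < card (S - X)" using X(2,3) by auto
      then have "X \<noteq> {}" "S - X \<noteq> {}" using card_gt_0_iff by blast+
      then have "Xb \<noteq> {}" "gnd N - Xb \<noteq> {}" using lift(1,2) by auto
      then show False using conn1[OF Xb] cc 2 by linarith
    next
      case 3
      then have "2 \<le> rk N Xb" "2 \<le> rk N (gnd N - Xb)" using rank2 X lift(3,4) by auto
      then show False using conn2[OF Xb] cc 3 by linarith
    qed
  qed
qed

section \<open>Separations in a 3-connected matroid and its contractions\<close>

locale tc_matroid =
  fixes M :: "'a matroid"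
  assumes matroid: "matroid M" and three_conn: "three_connected M"
    and card_E_ge6: "6 \<le> card (gnd M)"
begin

abbreviation "E \<equiv> gnd M"
abbreviation "r \<equiv> rk M"

lemma finite_E: "finite E" by (rule matroid_finite_gnd[OF matroid])
lemma rank_mono: "X \<subseteq> Y \<Longrightarrow> Y \<subseteq> E \<Longrightarrow> r X \<le> r Y" by (rule matroid_rank_mono[OF matroid])
lemma rank_le_card: "X \<subseteq> E \<Longrightarrow> r X \<le> card X" by (rule matroid_rank_le_card[OF matroid])
lemma rank_submod: "X \<subseteq> E \<Longrightarrow> Y \<subseteq> E \<Longrightarrow> r (X \<union> Y) + r (X \<inter> Y) \<le> r X + r Y"
  by (rule matroid_submodular[OF matroid])
lemma rank_insert_le: "X \<subseteq> E \<Longrightarrow> x \<in> E \<Longrightarrow> r (insert x X) \<le> r X + 1"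
  by (rule matroid_rank_insert_le[OF matroid])
lemma rank_le_rank_E: "X \<subseteq> E \<Longrightarrow> r X \<le> r E" by (rule rank_mono) auto

lemma rank_split_ge1:
  assumes "X \<subseteq> E" "X \<noteq> {}" "X \<noteq> E"
  shows "r E + 1 \<le> r X + r (E - X)"
proof -
  have "finite X" using assms(1) finite_E by (rule finite_subset)
  then have "1 \<le> card X" using assms(2) by (simp add: Suc_le_eq card_gt_0_iff)
  moreover have "1 \<le> card (E - X)"
    using assms(1,3) finite_E by (simp add: Suc_le_eq card_gt_0_iff)
  moreover have "\<not> separation M 1 X" using three_conn unfolding three_connected_def by auto
  ultimately show ?thesis using assms(1) unfolding separation_def conn_def by linarith
qed

lemma rank_split_ge2:
  assumes "X \<subseteq> E" "2 \<le> card X" "2 \<le> card (E - X)"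
  shows "r E + 2 \<le> r X + r (E - X)"
proof -
  have "\<not> separation M 2 X" using three_conn unfolding three_connected_def by auto
  then show ?thesis using assms unfolding separation_def conn_def by linarith
qed

lemma singleton_neq_E: "{x} \<noteq> E"
proof
  assume h: "{x} = E"
  have "card E = 1" by (simp add: h[symmetric])
  then show False using card_E_ge6 by simp
qed

lemma rank_singleton: assumes "x \<in> E" shows "r {x} = 1"
  using rank_split_ge1[of "{x}"] rank_le_rank_E[of "E - {x}"] rank_le_card[of "{x}"] assms
    singleton_neq_E by force

lemma rank_Diff_singleton: assumes "x \<in> E" shows "r (E - {x}) = r E"
  using rank_split_ge1[of "{x}"] rank_le_rank_E[of "E - {x}"] rank_singleton assms
    singleton_neq_E by force

lemma card_Diff_doubleton_ge2:
  assumes "x \<in> E" "y \<in> E" "x \<noteq> y"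
  shows "2 \<le> card (E - {x, y})"
  using assms finite_E card_E_ge6 by (simp add: card_Diff_subset)

lemma rank_doubleton: assumes "x \<in> E" "y \<in> E" "x \<noteq> y" shows "r {x, y} = 2"
  using rank_split_ge2[of "{x, y}"] card_Diff_doubleton_ge2[OF assms] rank_le_rank_E[of "E - {x, y}"]
    rank_le_card[of "{x, y}"] assms by fastforce

lemma rank_Diff_doubleton: assumes "x \<in> E" "y \<in> E" "x \<noteq> y" shows "r (E - {x, y}) = r E"
  using rank_split_ge2[of "{x, y}"] card_Diff_doubleton_ge2[OF assms] rank_le_rank_E[of "E - {x, y}"]
    rank_doubleton[OF assms] assms by fastforce

lemma rank_eq_card_if_card_le2:
  assumes "D \<subseteq> E" "card D \<le> 2"
  shows "r D = card D"
proof -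
  have "finite D" using assms finite_E finite_subset by blast
  then consider "D = {}" | x where "D = {x}" | x y where "D = {x, y}" "x \<noteq> y"
    using assms(2) card_2_iff[of D] card_1_singletonE[of D] by (cases "card D") (auto simp: le_Suc_eq)
  then show ?thesis
    by cases (use matroid_rank_empty[OF matroid] rank_singleton rank_doubleton assms in auto)
qed

lemma rank_triple_if_not_in_triangle:
  assumes "\<not> in_triangle M e" "x \<in> E" "y \<in> E" "e \<in> E" "x \<noteq> y" "x \<noteq> e" "y \<noteq> e"
  shows "r {x, y, e} = 3"
proof (rule ccontr)
  assume ne: "r {x, y, e} \<noteq> 3"
  have c3: "card {x, y, e} = 3" and sub: "{x, y, e} \<subseteq> E" using assms by auto
  then have "dependent M {x, y, e}" using ne rank_le_card[OF sub] unfolding dependent_def by auto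
  moreover have "\<not> dependent M D" if "D \<subset> {x, y, e}" for D
  proof -
    have "card D < 3" "D \<subseteq> E" using c3 psubset_card_mono[OF _ that] that sub by auto
    then show ?thesis using rank_eq_card_if_card_le2 unfolding dependent_def by auto
  qed
  ultimately have "triangle M {x, y, e}" using c3 unfolding triangle_def circuit_def by auto
  then show False using assms(1) unfolding in_triangle_def by auto
qed

lemma rank_insert_le3_spanned:
  assumes "{x, y, z, w} \<subseteq> E" "r {x, y, z} = 3" "r {x, y, z, w} \<le> 3"
  shows "r (insert w {x, y, z}) = r {x, y, z}"
  using rank_mono[of "{x, y, z}" "insert w {x, y, z}"] assms by (simp add: insert_commute)

lemma triadD:
  assumes "triad M T"
  shows "T \<subseteq> E" "card T = 3" "r (E - T) < r E" "\<And>x. x \<in> T \<Longrightarrow> r (E - (T - {x})) = r E"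
proof -
  show "T \<subseteq> E" "card T = 3" "r (E - T) < r E"
    using assms unfolding triad_def cocircuit_def by auto
  fix x assume x: "x \<in> T"
  have "T - {x} \<noteq> {}"
  proof
    assume "T - {x} = {}"
    then have "card T \<le> 1" using card_mono[of "{x}" T] by auto
    then show False using assms unfolding triad_def by auto
  qed
  moreover have "T - {x} \<subset> T" using x by auto
  ultimately show "r (E - (T - {x})) = r E" using assms unfolding triad_def cocircuit_def by auto
qed

lemma triad_not_spanned_compl:
  assumes "triad M T" "x \<in> T"
  shows "r (insert x (E - T)) \<noteq> r (E - T)"
proof -
  have "insert x (E - T) = E - (T - {x})" using assms triadD(1)[OF assms(1)] by auto
  then show ?thesis using triadD(3,4)[OF assms(1)] assms(2) by simp
qed

lemma rank_insert_triad:
  assumes "triad M T" "x \<in> T" "Z \<subseteq> E - T"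
  shows "r (insert x Z) = r Z + 1"
  using matroid_rank_insert_not_spanned[OF matroid assms(3) _ _ triad_not_spanned_compl[OF assms(1,2)]]
    triadD(1)[OF assms(1)] assms(2) by auto

lemma corank_drop_if_not_spanned:
  assumes "G \<subseteq> E" "g \<in> E" "g \<notin> G" "D \<subseteq> insert g G" "D \<subseteq> E"
    "r (insert g (E - D)) \<noteq> r (E - D)"
  shows "r (E - G) \<noteq> r (E - insert g G)"
proof -
  have "r (insert g (E - insert g G)) = r (E - insert g G) + 1"
    by (rule matroid_rank_insert_not_spanned[OF matroid, of _ "E - D"]) (use assms in auto)
  moreover have "insert g (E - insert g G) = E - G" using assms by auto
  ultimately show ?thesis by simp
qed

definition contr :: "'a set \<Rightarrow> 'a matroid" where
  "contr K = (E - K, \<lambda>X. r (X \<union> K) - r K)"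

text \<open>\<open>low_conn K X\<close> says that \<open>X\<close> has connectivity at most 1 in \<open>M/K\<close>, see \<open>conn_contr\<close>.\<close>

definition low_conn :: "'a set \<Rightarrow> 'a set \<Rightarrow> bool" where
  "low_conn K X \<longleftrightarrow> r (X \<union> K) + r (E - X) \<le> r E + r K + 1"

definition two_sep :: "'a set \<Rightarrow> 'a set \<Rightarrow> bool" where
  "two_sep K X \<longleftrightarrow> X \<subseteq> E - K \<and> 2 \<le> card X \<and> 2 \<le> card (E - K - X) \<and> low_conn K X"

lemma contract_eq_contr: "contract M e = contr {e}"
  by (simp add: contract_def contr_def)

lemma conn_contr:
  assumes "K \<subseteq> E" "X \<subseteq> E - K"
  shows "conn (contr K) X = r (X \<union> K) + r (E - X) - (r E + r K)"
proof -
  have "(E - K - X) \<union> K = E - X" "(E - K) \<union> K = E" using assms by auto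
  moreover have "r K \<le> r (X \<union> K)" "r K \<le> r (E - X)" "r (X \<union> K) \<le> r E"
    by (rule rank_mono; use assms in auto)+
  ultimately show ?thesis unfolding conn_def contr_def gnd_pair rk_pair by simp
qed

lemma two_sep_compl:
  assumes "K \<subseteq> E" "two_sep K X"
  shows "two_sep K (E - K - X)"
proof -
  have X: "X \<subseteq> E - K" using assms unfolding two_sep_def by auto
  have "E - K - (E - K - X) = X" "(E - K - X) \<union> K = E - X" "E - (E - K - X) = X \<union> K"
    using X assms(1) by auto
  then show ?thesis using assms unfolding two_sep_def low_conn_def by auto
qed

lemma three_connected_contr:
  assumes K: "K \<subseteq> E"
    and conn1: "\<And>X. X \<subseteq> E - K \<Longrightarrow> X \<noteq> {} \<Longrightarrow> E - K - X \<noteq> {} \<Longrightarrow>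
      r E + r K + 1 \<le> r (X \<union> K) + r (E - X)"
    and no_sep: "\<And>X. \<not> two_sep K X"
  shows "three_connected (contr K)"
  unfolding three_connected_def
proof (intro allI impI notI)
  fix k X assume k: "k < (3::nat)" and s: "separation (contr K) k X"
  have X: "X \<subseteq> E - K" and c1: "k \<le> card X" and c2: "k \<le> card (E - K - X)"
    and cc: "r (X \<union> K) + r (E - X) - (r E + r K) < k"
    using s conn_contr[OF K] unfolding separation_def by (auto simp: contr_def)
  consider "k = 0" | "k = 1" | "k = 2" using k by linarith
  then show False
  proof cases
    case 1 then show False using cc by simp
  next
    case 2
    then have "0 < card X" "0 < card (E - K - X)" using c1 c2 by auto
    then have "X \<noteq> {}" "E - K - X \<noteq> {}" using card_gt_0_iff by blast+
    then show False using conn1[OF X] cc 2 by linarith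
  next
    case 3
    then have "two_sep K X" using X c1 c2 cc unfolding two_sep_def low_conn_def by linarith
    then show False using no_sep by blast
  qed
qed

lemma three_connected_contr_rank_split:
  assumes K: "K \<subseteq> E" and tc: "three_connected (contr K)"
    and X: "X \<subseteq> E - K" "2 \<le> card X" "2 \<le> card (E - K - X)"
  shows "r E + r K + 2 \<le> r (X \<union> K) + r (E - X)"
proof -
  have "\<not> separation (contr K) 2 X" using tc unfolding three_connected_def by auto
  then have "\<not> conn (contr K) X < 2" using X unfolding separation_def contr_def by auto
  then show ?thesis using conn_contr[OF K X(1)] by linarith
qed

lemma three_connected_contract_contract:
  assumes "a \<in> E" "b \<in> E" "three_connected (contr {a, b})"
  shows "three_connected (contract (contract M a) b)"
proof (rule three_connected_cong[OF _ _ assms(3)])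
  show "gnd (contr {a, b}) = gnd (contract (contract M a) b)"
    by (auto simp: contract_def contr_def)
  have "r {a} \<le> r {a, b}" "r {a, b} \<le> r (X \<union> {a, b})" if "X \<subseteq> E - {a, b}" for X
    by (rule rank_mono; use assms that in auto)+
  moreover have "X \<union> {b} \<union> {a} = X \<union> {a, b}" "{b} \<union> {a} = {a, b}" for X by auto
  ultimately show "\<forall>X. X \<subseteq> gnd (contr {a, b}) \<longrightarrow> rk (contr {a, b}) X = rk (contract (contract M a) b) X"
    by (simp add: contract_def contr_def)
qed

lemma two_sep_insert:
  assumes K: "K \<subseteq> E" and s: "two_sep K X" and g: "g \<in> E - K - X"
    and big: "3 \<le> card (E - K - X)"
    and step: "r (insert g (X \<union> K)) = r (X \<union> K) \<or> r (E - insert g X) < r (E - X)"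
  shows "two_sep K (insert g X)"
proof -
  have X: "X \<subseteq> E - K" "2 \<le> card X" "low_conn K X" using s unfolding two_sep_def by auto
  have "r (E - insert g X) \<le> r (E - X)" by (rule rank_mono) auto
  moreover have "r (insert g (X \<union> K)) \<le> r (X \<union> K) + 1" using rank_insert_le[of "X \<union> K" g] X(1) K g by auto
  ultimately have "low_conn K (insert g X)" using step X(3) unfolding low_conn_def by auto
  moreover have "E - K - insert g X = (E - K - X) - {g}" by auto
  then have "2 \<le> card (E - K - insert g X)" using big g finite_E by simp
  moreover have "finite X" using X(1) finite_E finite_subset by blast
  then have "2 \<le> card (insert g X)" using X(2) card_insert_le[of X g] by linarith
  ultimately show ?thesis using X(1) g unfolding two_sep_def by auto
qed

definition growth_step :: "'a set \<Rightarrow> 'a set \<Rightarrow> (nat \<Rightarrow> 'a) \<Rightarrow> nat \<Rightarrow> bool" where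
  "growth_step K X g l \<longleftrightarrow> g l \<in> X
     \<or> r (insert (g l) (g ` {..<l} \<union> K)) = r (g ` {..<l} \<union> K)
     \<or> r (E - g ` {..<l}) \<noteq> r (E - insert (g l) (g ` {..<l}))"

lemma two_sep_grow:
  assumes K: "K \<subseteq> E" and s: "two_sep K X0"
    and gE: "\<And>l. l < m \<Longrightarrow> g l \<in> E - K"
    and step: "\<And>l. l < m \<Longrightarrow> growth_step K X0 g l"
  shows "\<exists>X. X0 \<subseteq> X \<and> two_sep K X \<and> (card (E - K - X) = 2 \<or> g ` {..<m} \<subseteq> X)"
  using gE step
proof (induction m)
  case 0 then show ?case using s by auto
next
  case (Suc m)
  then obtain X where X: "X0 \<subseteq> X" "two_sep K X" "card (E - K - X) = 2 \<or> g ` {..<m} \<subseteq> X"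
    by auto
  have XE: "X \<subseteq> E - K" using X(2) unfolding two_sep_def by auto
  show ?case
  proof (cases "card (E - K - X) = 2 \<or> g m \<in> X")
    case True
    then show ?thesis using X by (auto simp: lessThan_Suc)
  next
    case False
    then have G: "g ` {..<m} \<subseteq> X" and gm: "g m \<in> E - K - X" and big: "3 \<le> card (E - K - X)"
      using X Suc.prems(1) unfolding two_sep_def by auto
    have "growth_step K X0 g m" using Suc.prems(2) by simp
    then have "r (insert (g m) (X \<union> K)) = r (X \<union> K) \<or> r (E - insert (g m) X) < r (E - X)"
      unfolding growth_step_def
    proof (elim disjE)
      assume "g m \<in> X0"
      then show ?thesis using False X(1) by auto
    next
      assume "r (insert (g m) (g ` {..<m} \<union> K)) = r (g ` {..<m} \<union> K)"
      then show ?thesis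
        using matroid_spanned_mono[OF matroid, of "g ` {..<m} \<union> K" "X \<union> K" "g m"] G XE K gm
        by auto
    next
      assume "r (E - g ` {..<m}) \<noteq> r (E - insert (g m) (g ` {..<m}))"
      moreover have "insert (g m) (E - insert (g m) (g ` {..<m})) = E - g ` {..<m}"
        using gm G by auto
      ultimately have "r (insert (g m) (E - insert (g m) X)) = r (E - insert (g m) X) + 1"
        using matroid_rank_insert_not_spanned[OF matroid, of "E - insert (g m) X"
            "E - insert (g m) (g ` {..<m})" "g m"] G gm by auto
      moreover have "insert (g m) (E - insert (g m) X) = E - X" using gm by auto
      ultimately show ?thesis by simp
    qed
    then have "two_sep K (insert (g m) X)" by (rule two_sep_insert[OF K X(2) gm big])
    then show ?thesis using X(1) G by (intro exI[of _ "insert (g m) X"]) (auto simp: lessThan_Suc)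
  qed
qed

lemma contr_singleton_conn1:
  assumes e: "e \<in> E" and X: "X \<subseteq> E - {e}" "X \<noteq> {}" "E - {e} - X \<noteq> {}"
  shows "r E + r {e} + 1 \<le> r (X \<union> {e}) + r (E - X)"
proof (cases "card X = 1")
  case True
  then obtain x where x: "X = {x}" by (auto simp: card_Suc_eq)
  then show ?thesis using rank_doubleton[of e x] rank_Diff_singleton[of x] rank_singleton[OF e] X e
    by (auto simp: insert_commute)
next
  case False
  have "finite X" using X finite_E finite_subset by blast
  then have "2 \<le> card X" using X(2) False by (rule card_ge2_if_not_le1)
  moreover obtain y where "y \<in> E - {e} - X" using X by blast
  then have "2 \<le> card (E - X)" using card_ge2_of_two[of "E - X" e y] e X finite_E by auto
  ultimately have "r E + 2 \<le> r X + r (E - X)" using rank_split_ge2 X by auto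
  moreover have "r X \<le> r (X \<union> {e})" by (rule rank_mono) (use X e in auto)
  ultimately show ?thesis using rank_singleton[OF e] by linarith
qed

lemma two_sep_singleton_spans:
  assumes e: "e \<in> E" and s: "two_sep {e} X"
  shows "r (insert e X) = r X"
proof -
  have X: "X \<subseteq> E - {e}" "2 \<le> card X" "2 \<le> card (E - {e} - X)" "low_conn {e} X"
    using s unfolding two_sep_def by auto
  have "card (E - {e} - X) \<le> card (E - X)" by (rule card_mono) (use finite_E in auto)
  then have "2 \<le> card (E - X)" using X by linarith
  then have "r E + 2 \<le> r X + r (E - X)" using rank_split_ge2[of X] X by auto
  moreover have "r X \<le> r (insert e X)" by (rule rank_mono) (use X e in auto)
  ultimately show ?thesis using X(4) rank_singleton[OF e] unfolding low_conn_def by simp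
qed

lemma two_sep_singleton_card_ge3:
  assumes e: "e \<in> E" and nt: "\<not> in_triangle M e" and s: "two_sep {e} X"
  shows "3 \<le> card X"
proof (rule ccontr)
  have X: "X \<subseteq> E - {e}" "2 \<le> card X" using s unfolding two_sep_def by auto
  assume "\<not> 3 \<le> card X"
  with X have "card X = 2" by simp
  then obtain x y where xy: "X = {x, y}" "x \<noteq> y" by (meson card_2_iff)
  have "r {x, y, e} = 3" using rank_triple_if_not_in_triangle[OF nt] xy X e by auto
  moreover have "r X \<le> 2" using rank_le_card[of X] X \<open>card X = 2\<close> by auto
  ultimately show False using two_sep_singleton_spans[OF e s] xy by (simp add: insert_commute)
qed

lemma two_sep_singleton_meets_triad:
  assumes e: "e \<in> E" and s: "two_sep {e} X" and T: "triad M T" "e \<in> T"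
  shows "X \<inter> T \<noteq> {}"
proof
  assume "X \<inter> T = {}"
  then have "X \<subseteq> E - T" using s unfolding two_sep_def by auto
  then show False using rank_insert_triad[OF T] two_sep_singleton_spans[OF e s] by simp
qed

lemma contr_doubleton_conn1:
  assumes ab: "a \<in> E" "b \<in> E" "a \<noteq> b" and nt: "\<not> in_triangle M a"
    and tc: "three_connected (contr {a})"
    and X: "X \<subseteq> E - {a, b}" "X \<noteq> {}" "E - {a, b} - X \<noteq> {}"
  shows "r E + r {a, b} + 1 \<le> r (X \<union> {a, b}) + r (E - X)"
proof -
  have rab: "r {a, b} = 2" using rank_doubleton[OF ab] .
  have finX: "finite X" using X finite_E finite_subset by blast
  have finY: "finite (E - {a, b} - X)" using finite_E by simp
  show ?thesis
  proof (cases "card X = 1")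
    case True
    then obtain x where x: "X = {x}" by (auto simp: card_Suc_eq)
    have "r {x, b, a} = 3" using rank_triple_if_not_in_triangle[OF nt] x X ab by auto
    moreover have "{x, b, a} = X \<union> {a, b}" using x by auto
    moreover have "r (E - {x}) = r E" using rank_Diff_singleton x X by auto
    ultimately show ?thesis using x rab by simp
  next
    case X1: False
    show ?thesis
    proof (cases "card (E - {a, b} - X) = 1")
      case True
      then obtain y where y: "E - {a, b} - X = {y}" by (auto simp: card_Suc_eq)
      have yE: "y \<in> E" "y \<noteq> a" "y \<noteq> b" using y by auto
      have "r {y, b, a} = 3" using rank_triple_if_not_in_triangle[OF nt] yE ab by auto
      moreover have "E - X = {y, b, a}" "X \<union> {a, b} = E - {y}" using y X ab by auto
      moreover have "r (E - {y}) = r E" using rank_Diff_singleton yE by auto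
      ultimately show ?thesis using rab by simp
    next
      case False
      have "2 \<le> card X" by (rule card_ge2_if_not_le1[OF finX X(2) X1])
      moreover have "2 \<le> card (E - {a, b} - X)" by (rule card_ge2_if_not_le1[OF finY X(3) False])
      moreover have "card (E - {a, b} - X) \<le> card (E - {a} - X)"
        by (rule card_mono) (use finite_E in auto)
      ultimately have "r E + r {a} + 2 \<le> r (X \<union> {a}) + r (E - X)"
        using three_connected_contr_rank_split[OF _ tc, of X] X ab by auto
      moreover have "r (X \<union> {a}) \<le> r (X \<union> {a, b})" by (rule rank_mono) (use X ab in auto)
      ultimately show ?thesis using rab rank_singleton[OF ab(1)] by linarith
    qed
  qed
qed

lemma two_sep_doubleton_spans:
  assumes ab: "a \<in> E" "b \<in> E" "a \<noteq> b" and tc: "three_connected (contr {a})"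
    and s: "two_sep {a, b} X"
  shows "r (insert b (X \<union> {a})) = r (X \<union> {a})"
proof -
  have X: "X \<subseteq> E - {a, b}" "2 \<le> card X" "2 \<le> card (E - {a, b} - X)" "low_conn {a, b} X"
    using s unfolding two_sep_def by auto
  have "card (E - {a, b} - X) \<le> card (E - {a} - X)" by (rule card_mono) (use finite_E in auto)
  then have "2 \<le> card (E - {a} - X)" using X(3) by linarith
  moreover have "{a} \<subseteq> E" "X \<subseteq> E - {a}" using X(1) ab by auto
  ultimately have "r E + r {a} + 2 \<le> r (X \<union> {a}) + r (E - X)"
    using three_connected_contr_rank_split[OF _ tc _ X(2)] by blast
  moreover have "r (X \<union> {a}) \<le> r (insert b (X \<union> {a}))" by (rule rank_mono) (use X ab in auto)
  moreover have "insert b (X \<union> {a}) = X \<union> {a, b}" by auto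
  ultimately show ?thesis
    using X(4) rank_doubleton[OF ab] rank_singleton[OF ab(1)] unfolding low_conn_def by simp
qed

lemma two_sep_doubleton_card2_rank:
  assumes ab: "a \<in> E" "b \<in> E" "a \<noteq> b" and s: "two_sep {a, b} X" and c: "card X = 2"
  shows "r (X \<union> {a, b}) \<le> 3"
proof -
  have X: "X \<subseteq> E - {a, b}" "low_conn {a, b} X" using s unfolding two_sep_def by auto
  obtain x y where xy: "X = {x, y}" "x \<noteq> y" using c by (meson card_2_iff)
  then have "r (E - X) = r E" using X(1) rank_Diff_doubleton[of x y] by auto
  then show ?thesis using X(2) rank_doubleton[OF ab] unfolding low_conn_def by simp
qed

lemma two_sep_doubleton_meets:
  assumes ab: "a \<in> E" "b \<in> E" "a \<noteq> b" and tc: "three_connected (contr {a})"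
    and s: "two_sep {a, b} X"
    and D: "D \<subseteq> E" "b \<in> D" "a \<notin> D" "r (insert b (E - D)) \<noteq> r (E - D)"
  shows "X \<inter> D \<noteq> {}"
proof
  assume "X \<inter> D = {}"
  moreover have "X \<subseteq> E - {a, b}" using s unfolding two_sep_def by auto
  ultimately have "X \<union> {a} \<subseteq> E - D" using D ab by auto
  then have "r (insert b (X \<union> {a})) = r (X \<union> {a}) + 1"
    using matroid_rank_insert_not_spanned[OF matroid, of "X \<union> {a}" "E - D" b] D ab by auto
  then show False using two_sep_doubleton_spans[OF ab tc s] by simp
qed

lemma triple_split:
  assumes "P \<subseteq> E - K" "card P = 3" "X \<subseteq> E - K"
  shows "2 \<le> card (P \<inter> X) \<or> 2 \<le> card (P \<inter> (E - K - X))"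
proof -
  have finP: "finite P" using assms by (metis card.infinite zero_neq_numeral)
  have un: "P = (P \<inter> X) \<union> (P \<inter> (E - K - X))" using assms by auto
  have "card P = card (P \<inter> X) + card (P \<inter> (E - K - X))"
    by (subst un, rule card_Un_disjoint) (use finP in auto)
  then show ?thesis using assms by linarith
qed

lemma no_two_sep_if_no_side_holds_pair:
  assumes K: "K \<subseteq> E" and P: "P \<subseteq> E - K" "card P = 3"
    and pair: "\<And>X. two_sep K X \<Longrightarrow> 2 \<le> card (P \<inter> X) \<Longrightarrow> False"
  shows "\<not> two_sep K X"
proof
  assume s: "two_sep K X"
  then have "X \<subseteq> E - K" unfolding two_sep_def by auto
  then show False using triple_split[OF P] pair s two_sep_compl[OF K s] by blast
qed

lemma spanning_triple_side_absorbs: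
  assumes K: "K \<subseteq> E" and P: "P \<subseteq> E - K" "card P = 3"
    and spanned: "\<And>x. x \<in> P \<Longrightarrow> r (insert x ((P - {x}) \<union> K)) = r ((P - {x}) \<union> K)"
    and meets: "\<And>Z. two_sep K Z \<Longrightarrow> Z \<inter> P \<noteq> {}"
    and s: "two_sep K X" and big: "3 \<le> card (E - K - X)" and pair: "2 \<le> card (P \<inter> X)"
  shows False
proof (cases "P \<subseteq> X")
  case True
  then show False using meets[OF two_sep_compl[OF K s]] by auto
next
  case False
  then obtain s0 where s0: "s0 \<in> P" "s0 \<notin> X" by blast
  have finP: "finite P" using P by (metis card.infinite zero_neq_numeral)
  have "P \<inter> X \<subseteq> P - {s0}" "card (P - {s0}) = 2" using s0 P finP by auto
  then have PX: "P \<inter> X = P - {s0}" using pair finP by (metis card_seteq finite_Diff)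
  have X: "X \<subseteq> E - K" using s unfolding two_sep_def by auto
  have "r (insert s0 (X \<union> K)) = r (X \<union> K)"
    using matroid_spanned_mono[OF matroid, of "(P - {s0}) \<union> K" "X \<union> K" s0] spanned[OF s0(1)]
      PX K X P s0 by auto
  then have "two_sep K (insert s0 X)" using two_sep_insert[OF K s _ big] s0 P by auto
  moreover have "P \<subseteq> insert s0 X" using PX by auto
  ultimately show False using meets[OF two_sep_compl[OF K]] K by auto
qed

lemma no_two_sep_if_spanning_triple:
  assumes K: "K \<subseteq> E" and P: "P \<subseteq> E - K" "card P = 3"
    and spanned: "\<And>x. x \<in> P \<Longrightarrow> r (insert x ((P - {x}) \<union> K)) = r ((P - {x}) \<union> K)"
    and meets: "\<And>Z. two_sep K Z \<Longrightarrow> Z \<inter> P \<noteq> {}"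
    and big: "3 \<le> card X" "3 \<le> card (E - K - X)"
  shows "\<not> two_sep K X"
proof
  assume s: "two_sep K X"
  then have X: "X \<subseteq> E - K" unfolding two_sep_def by auto
  then have "E - K - (E - K - X) = X" by auto
  then show False
    using triple_split[OF P X] big
      spanning_triple_side_absorbs[OF K P spanned meets s]
      spanning_triple_side_absorbs[OF K P spanned meets two_sep_compl[OF K s]] by auto
qed

lemma contract_contract_facts:
  assumes ab: "a \<in> E" "b \<in> E" "a \<noteq> b"
  shows "gnd (contract (contract M a) b) = E - {a, b}"
    "\<And>X. X \<subseteq> E - {a, b} \<Longrightarrow> rk (contract (contract M a) b) X + 2 = r (X \<union> {a, b})"
    "matroid (contract (contract M a) b)"
proof -
  show "gnd (contract (contract M a) b) = E - {a, b}" by (auto simp: contract_def)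
  fix X assume X: "X \<subseteq> E - {a, b}"
  have e: "X \<union> {b} \<union> {a} = X \<union> {a, b}" "{b} \<union> {a} = {a, b}" by auto
  have "r {a} \<le> r {a, b}" "r {a, b} \<le> r (X \<union> {a, b})" by (rule rank_mono; use ab X in auto)+
  then show "rk (contract (contract M a) b) X + 2 = r (X \<union> {a, b})"
    using rank_doubleton[OF ab] rank_singleton[OF ab(1)] unfolding contract_def rk_pair e by simp
next
  have "matroid (contract M a)" by (rule matroid_contract[OF matroid ab(1)])
  moreover have "b \<in> gnd (contract M a)" using ab by (simp add: contract_def)
  ultimately show "matroid (contract (contract M a) b)" by (rule matroid_contract)
qed

lemma three_connected_contract_contract_if_no_two_sep:
  assumes ab: "a \<in> E" "b \<in> E" "a \<noteq> b" and nt: "\<not> in_triangle M a"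
    and tc: "three_connected (contr {a})" and no_sep: "\<And>X. \<not> two_sep {a, b} X"
  shows "three_connected (contract (contract M a) b)"
  using ab contr_doubleton_conn1[OF ab nt tc] no_sep
  by (intro three_connected_contract_contract three_connected_contr) auto

lemma si_three_connected_contract_contract:
  assumes ab: "a \<in> E" "b \<in> E" "a \<noteq> b" and nt: "\<not> in_triangle M a"
    and tc: "three_connected (contr {a})"
    and no_sep: "\<And>X. two_sep {a, b} X \<Longrightarrow> 4 \<le> r (X \<union> {a, b}) \<Longrightarrow> 4 \<le> r (E - X) \<Longrightarrow> False"
  shows "three_connected (si (contract (contract M a) b))"
proof -
  define N where "N = contract (contract M a) b"
  note N = contract_contract_facts[OF ab, folded N_def]
  have rank_compl: "rk N (gnd N - X) + 2 = r (E - X)" if "X \<subseteq> gnd N" for X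
  proof -
    have "(E - {a, b} - X) \<union> {a, b} = E - X" using N(1) that ab by auto
    then show ?thesis using N(2)[of "E - {a, b} - X"] N(1) by simp
  qed
  have rank_E: "rk N (gnd N) + 2 = r E"
    using rank_compl[of "{}"] N(2)[of "{}"] by simp
  have nl: "\<forall>x\<in>gnd N. rk N {x} = 1"
  proof
    fix x assume x: "x \<in> gnd N"
    then have "r {x, b, a} = 3" using rank_triple_if_not_in_triangle[OF nt, of x b] N(1) ab by auto
    moreover have "{x} \<union> {a, b} = {x, b, a}" by auto
    ultimately show "rk N {x} = 1" using N(2)[of "{x}"] x N(1) by simp
  qed
  show ?thesis unfolding N_def[symmetric]
  proof (rule si_three_connected[OF N(3) nl])
    fix X assume X: "X \<subseteq> gnd N" "X \<noteq> {}" "gnd N - X \<noteq> {}"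
    then show "rk N (gnd N) + 1 \<le> rk N X + rk N (gnd N - X)"
      using contr_doubleton_conn1[OF ab nt tc, of X] N(1) N(2)[of X] rank_compl[of X] rank_E
        rank_doubleton[OF ab] by simp
  next
    fix X assume X: "X \<subseteq> gnd N" "2 \<le> rk N X" "2 \<le> rk N (gnd N - X)"
    show "rk N (gnd N) + 2 \<le> rk N X + rk N (gnd N - X)"
    proof (rule ccontr)
      assume "\<not> ?thesis"
      then have "low_conn {a, b} X"
        using N(2)[of X] X(1) N(1) rank_compl[OF X(1)] rank_E rank_doubleton[OF ab]
        unfolding low_conn_def by simp
      moreover have "2 \<le> card X" "2 \<le> card (gnd N - X)"
        using matroid_rank_le_card[OF N(3), of X] matroid_rank_le_card[OF N(3), of "gnd N - X"] X
        by auto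
      ultimately have "two_sep {a, b} X" using X(1) N(1) unfolding two_sep_def by simp
      moreover have "4 \<le> r (X \<union> {a, b})" "4 \<le> r (E - X)"
        using N(2)[of X] X N(1) rank_compl[OF X(1)] by auto
      ultimately show False by (rule no_sep)
    qed
  qed
qed

end

section \<open>Flans\<close>

locale flan_setting = tc_matroid +
  fixes F :: "'a set" and fs :: "'a list"
  assumes flan_ord: "flan_ordering M F fs" and F_neq_E: "F \<noteq> gnd M"
    and maximal: "maximal_flan M F"
begin

abbreviation "t \<equiv> length fs"

definition Fk :: "nat \<Rightarrow> 'a set" where "Fk k = (!) fs ` {..<k}"

lemma distinct_fs: "distinct fs" and set_fs: "set fs = F" and F_sub_E: "F \<subseteq> E"
  and length_ge4: "4 \<le> t"
  using flan_ord unfolding flan_ordering_def by auto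

lemma card_F: "card F = t" using set_fs distinct_card distinct_fs by blast

lemma nth_in_E: "k < t \<Longrightarrow> fs ! k \<in> E" using set_fs F_sub_E nth_mem by blast

lemma nth_neq: "k < t \<Longrightarrow> l < t \<Longrightarrow> k \<noteq> l \<Longrightarrow> fs ! k \<noteq> fs ! l"
  using distinct_fs nth_eq_iff_index_eq by blast

lemma Fk_eq_set_take: "k \<le> t \<Longrightarrow> Fk k = set (take k fs)"
  unfolding Fk_def using nth_image[of k fs] by (simp only: atLeast0LessThan)

lemma F_eq_Fk: "F = Fk t" using Fk_eq_set_take[of t] set_fs by simp

lemma Fk_sub_E: "k \<le> t \<Longrightarrow> Fk k \<subseteq> E"
  using Fk_eq_set_take[of k] set_take_subset[of k fs] set_fs F_sub_E by simp

lemma Fk_Suc: "Fk (Suc k) = insert (fs ! k) (Fk k)" unfolding Fk_def lessThan_Suc by simp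

lemma Fk_mono: "k \<le> l \<Longrightarrow> Fk k \<subseteq> Fk l" unfolding Fk_def by auto

lemma nth_in_Fk_iff:
  assumes "l < t" "k \<le> t"
  shows "fs ! l \<in> Fk k \<longleftrightarrow> l < k"
proof
  assume "fs ! l \<in> Fk k"
  then obtain i where i: "i < k" "fs ! l = fs ! i" unfolding Fk_def by auto
  show "l < k"
  proof (rule ccontr)
    assume "\<not> l < k"
    then have "l \<noteq> i" "i < t" using i assms by auto
    then show False using nth_neq[OF assms(1)] i by metis
  qed
qed (auto simp: Fk_def)

lemma card_Fk:
  assumes "k \<le> t"
  shows "card (Fk k) = k"
proof -
  have "inj_on ((!) fs) {..<k}" using inj_on_nth[OF distinct_fs] assms by auto
  then show ?thesis unfolding Fk_def by (simp add: card_image)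
qed

lemma Fk3_eq: "Fk 3 = {fs ! 0, fs ! 1, fs ! 2}"
  unfolding Fk_def by (simp add: lessThan_Suc numeral_eq_Suc insert_commute)

lemma Fk4_eq: "Fk 4 = {fs ! 0, fs ! 1, fs ! 2, fs ! 3}"
  unfolding Fk_def by (simp add: lessThan_Suc numeral_eq_Suc insert_commute)

lemma triad_at:
  assumes "even m" "m + 2 < t"
  shows "triad M {fs ! m, fs ! (m + 1), fs ! (m + 2)}"
proof -
  have "odd (m + 1)" "1 \<le> m + 1" "m + 1 \<le> t - 2" using assms by auto
  then have "triad M {fs ! (m + 1 - 1), fs ! (m + 1), fs ! (m + 1 + 1)}"
    using flan_ord unfolding flan_ordering_def by blast
  then show ?thesis by simp
qed

lemma triad_ending_at:
  assumes "even n" "2 \<le> n" "n < t"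
  shows "triad M {fs ! (n - 2), fs ! (n - 1), fs ! n}"
  using triad_at[of "n - 2"] assms by (simp add: numeral_2_eq_2 Suc_diff_Suc)

lemma triad_first: "triad M {fs ! 0, fs ! 1, fs ! 2}"
  using triad_at[of 0] length_ge4 by (simp add: numeral_2_eq_2)

lemma spanned_at_odd:
  assumes "odd m" "3 \<le> m" "m < t"
  shows "r (insert (fs ! m) (Fk m)) = r (Fk m)"
proof -
  have "even (m + 1)" "4 \<le> m + 1" "m + 1 \<le> t" using assms by auto
  then have "fs ! (m + 1 - 1) \<in> cl M (set (take (m + 1 - 1) fs))"
    using flan_ord unfolding flan_ordering_def by blast
  then show ?thesis using Fk_eq_set_take[of m] assms unfolding cl_def by simp
qed

lemma rank_Fk3_le3: "r (Fk 3) \<le> 3"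
  using rank_le_card[of "Fk 3"] Fk_sub_E[of 3] card_Fk[of 3] length_ge4 by simp

lemma rank_Fk4_le3: "r (Fk 4) \<le> 3"
proof -
  have "r (insert (fs ! 3) (Fk 3)) = r (Fk 3)" using spanned_at_odd[of 3] length_ge4 by simp
  moreover have "Fk 4 = insert (fs ! 3) (Fk 3)" using Fk_Suc[of 3] by (simp add: numeral_nat)
  ultimately show ?thesis using rank_Fk3_le3 by simp
qed

lemma conn_Fk_le2:
  assumes "3 \<le> k" "k \<le> t"
  shows "r (Fk k) + r (E - Fk k) \<le> r E + 2"
  using assms
proof (induction k rule: nat_induct_at_least)
  case base
  have "r (E - Fk 3) < r E" using triadD(3)[OF triad_first] Fk3_eq by simp
  then show ?case using rank_Fk3_le3 by simp
next
  case (Suc k)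
  have IH: "r (Fk k) + r (E - Fk k) \<le> r E + 2" and kt: "k < t" using Suc by simp_all
  have eq: "Fk (Suc k) = insert (fs ! k) (Fk k)" by (rule Fk_Suc)
  show ?case
  proof (cases "odd k")
    case True
    have "r (Fk (Suc k)) = r (Fk k)" using spanned_at_odd[OF True Suc(1) kt] eq by simp
    moreover have "r (E - Fk (Suc k)) \<le> r (E - Fk k)" by (rule rank_mono) (use eq in auto)
    ultimately show ?thesis using IH by linarith
  next
    case False
    then have T: "triad M {fs ! (k - 2), fs ! (k - 1), fs ! k}"
      using triad_ending_at Suc(1) kt by simp
    have "{fs ! (k - 2), fs ! (k - 1), fs ! k} \<subseteq> Fk (Suc k)"
      unfolding Fk_def using Suc(1) by auto
    then have "r (insert (fs ! k) (E - Fk (Suc k))) = r (E - Fk (Suc k)) + 1"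
      by (intro rank_insert_triad[OF T]) auto
    moreover have "insert (fs ! k) (E - Fk (Suc k)) = E - Fk k"
      using eq nth_in_E[OF kt] nth_in_Fk_iff[of k k] kt by auto
    ultimately have "r (E - Fk k) = r (E - Fk (Suc k)) + 1" by simp
    moreover have "r (Fk (Suc k)) \<le> r (Fk k) + 1"
      using rank_insert_le[OF Fk_sub_E nth_in_E[OF kt]] eq kt by simp
    ultimately show ?thesis using IH by linarith
  qed
qed

lemma flan_ordering_snoc:
  assumes "odd t" "q \<in> E" "q \<notin> F" "r (insert q F) = r F"
  shows "flan_ordering M (insert q F) (fs @ [q])"
  unfolding flan_ordering_def
proof (intro conjI allI impI)
  show "distinct (fs @ [q])" "set (fs @ [q]) = insert q F" "insert q F \<subseteq> E"
    "4 \<le> length (fs @ [q])"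
    using distinct_fs set_fs F_sub_E length_ge4 assms by auto
next
  fix k assume k: "odd k \<and> 1 \<le> k \<and> k \<le> length (fs @ [q]) - 2"
  then have "k \<le> t - 2" using assms(1) by simp presburger
  then have "triad M {fs ! (k - 1), fs ! k, fs ! (k + 1)}"
    using flan_ord k unfolding flan_ordering_def by blast
  moreover have "k + 1 < t" "k - 1 < t" "k < t" using \<open>k \<le> t - 2\<close> length_ge4 by linarith+
  ultimately show "triad M {(fs @ [q]) ! (k - 1), (fs @ [q]) ! k, (fs @ [q]) ! (k + 1)}"
    by (simp add: nth_append)
next
  fix k assume k: "even k \<and> 4 \<le> k \<and> k \<le> length (fs @ [q])"
  show "(fs @ [q]) ! (k - 1) \<in> cl M (set (take (k - 1) (fs @ [q])))"
  proof (cases "k \<le> t")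
    case True
    then have "fs ! (k - 1) \<in> cl M (set (take (k - 1) fs))"
      using flan_ord k unfolding flan_ordering_def by blast
    moreover have "k - 1 < t" using True k by linarith
    ultimately show ?thesis by (simp add: nth_append)
  next
    case False
    moreover have "k \<le> Suc t" using k by simp
    ultimately have "k - 1 = t" by linarith
    moreover have "q \<in> cl M (set fs)" unfolding cl_def using assms set_fs by simp
    ultimately show ?thesis by (simp add: nth_append)
  qed
qed

lemma not_spanned_by_F_if_odd:
  assumes "odd t" "q \<in> E" "q \<notin> F"
  shows "r (insert q F) \<noteq> r F"
proof
  assume "r (insert q F) = r F"
  then have "flan M (insert q F)" using flan_ordering_snoc assms unfolding flan_def by blast
  moreover have "F \<subset> insert q F" using assms by auto
  ultimately show False using maximal unfolding maximal_flan_def by blast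
qed

lemma corank_drop_at_even:
  assumes "even l" "4 \<le> l" "l < t" "G \<subseteq> Fk l" "fs ! (l - 2) \<in> G" "fs ! (l - 1) \<in> G"
  shows "r (E - G) \<noteq> r (E - insert (fs ! l) G)"
proof -
  have T: "triad M {fs ! (l - 2), fs ! (l - 1), fs ! l}" using triad_ending_at assms by simp
  show ?thesis
  proof (rule corank_drop_if_not_spanned[OF _ _ _ _ triadD(1)[OF T] triad_not_spanned_compl[OF T]])
    show "G \<subseteq> E" using Fk_sub_E[of l] assms by auto
    show "fs ! l \<notin> G" using nth_in_Fk_iff[of l l] assms by auto
  qed (use assms nth_in_E in auto)
qed

lemma not_spanned_at_even:
  assumes n: "even n" "4 \<le> n" "n < t"
  shows "r (insert (fs ! n) (Fk n)) \<noteq> r (Fk n)"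
proof
  assume spanned: "r (insert (fs ! n) (Fk n)) = r (Fk n)"
  have eq: "Fk (Suc n) = insert (fs ! n) (Fk n)" by (rule Fk_Suc)
  have "r (E - Fk n) \<noteq> r (E - Fk (Suc n))"
    using corank_drop_at_even[OF n, of "Fk n"] eq nth_in_Fk_iff n by simp
  moreover have "r (E - Fk (Suc n)) \<le> r (E - Fk n)" by (rule rank_mono) (use eq in auto)
  moreover have "E - Fk n = insert (fs ! n) (E - Fk (Suc n))"
    using eq nth_in_E nth_in_Fk_iff[of n n] n by auto
  then have "r (E - Fk n) \<le> r (E - Fk (Suc n)) + 1"
    using rank_insert_le[of "E - Fk (Suc n)" "fs ! n"] nth_in_E n by auto
  ultimately have lam: "r (Fk (Suc n)) + r (E - Fk (Suc n)) + 1 \<le> r E + 2"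
    using conn_Fk_le2[of n] spanned eq n by simp
  have FS: "Fk (Suc n) \<subseteq> E" "2 \<le> card (Fk (Suc n))" using Fk_sub_E card_Fk n by auto
  have small: "\<not> 2 \<le> card (E - Fk (Suc n))" using rank_split_ge2[OF FS] lam by auto
  have FF: "Fk (Suc n) \<subseteq> F" using F_eq_Fk Fk_mono n by simp
  obtain q where q: "q \<in> E" "q \<notin> F" using F_neq_E F_sub_E by blast
  have only_q: "x = q" if "x \<in> E - Fk (Suc n)" for x
    using card_ge2_of_two[of "E - Fk (Suc n)" x q] that q FF small finite_E by auto
  then have F: "F = Fk (Suc n)" "F = E - {q}" using FF q F_sub_E by blast+
  then have "t = Suc n" using card_F card_Fk[of "Suc n"] n by simp
  then have "odd t" using n(1) by simp
  moreover have "insert q F = E" "r F = r E" using F(2) q rank_Diff_singleton by auto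
  ultimately show False using not_spanned_by_F_if_odd[of q] q by metis
qed

lemma not_spanned_f4_compl:
  assumes t5: "5 \<le> t"
  shows "r (insert (fs ! 4) (E - {fs ! 0, fs ! 1, fs ! 3, fs ! 4}))
    \<noteq> r (E - {fs ! 0, fs ! 1, fs ! 3, fs ! 4})"
proof -
  define f0 f1 f2 f3 f4 where "f0 = fs ! 0" "f1 = fs ! 1" "f2 = fs ! 2" "f3 = fs ! 3" "f4 = fs ! 4"
  have inE: "f0 \<in> E" "f1 \<in> E" "f2 \<in> E" "f3 \<in> E" "f4 \<in> E"
    unfolding f0_f1_f2_f3_f4_def by (rule nth_in_E, use t5 in linarith)+
  have d: "f0 \<noteq> f1" "f0 \<noteq> f2" "f0 \<noteq> f3" "f0 \<noteq> f4" "f1 \<noteq> f2" "f1 \<noteq> f3" "f1 \<noteq> f4"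
     "f2 \<noteq> f3" "f2 \<noteq> f4" "f3 \<noteq> f4"
    unfolding f0_f1_f2_f3_f4_def by (rule nth_neq, use t5 in linarith, use t5 in linarith, simp)+
  have T1: "triad M {f0, f1, f2}" using triad_first unfolding f0_f1_f2_f3_f4_def .
  have T3: "triad M {f2, f3, f4}" using triad_at[of 2] t5 unfolding f0_f1_f2_f3_f4_def by simp
  have F4: "Fk 4 = {f0, f1, f2, f3}" using Fk4_eq unfolding f0_f1_f2_f3_f4_def .
  txt \<open>\<open>F\<^sub>4\<close> has rank 3, so \<open>E - F\<^sub>4\<close> has corank 1, and \<open>f2\<close> is a coloop of the complement of the first triad.\<close>
  have "r (insert f2 (E - {f0, f1, f2, f3})) = r (E - {f0, f1, f2, f3}) + 1"
    by (rule rank_insert_triad[OF T1]) auto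
  moreover have "insert f2 (E - {f0, f1, f2, f3}) = E - {f0, f1, f3}" using inE d by auto
  moreover have "Fk 4 \<subseteq> E" "finite (Fk 4)" using Fk_sub_E[of 4] t5 finite_E finite_subset by auto
  then have "card (E - Fk 4) = card E - 4" using card_Diff_subset[of "Fk 4" E] card_Fk[of 4] t5 by simp
  then have "r E + 2 \<le> r (Fk 4) + r (E - Fk 4)"
    using rank_split_ge2[OF Fk_sub_E] card_Fk[of 4] t5 card_E_ge6 by simp
  ultimately have "r E \<le> r (E - {f0, f1, f3})" using rank_Fk4_le3 F4 by simp
  then have S1: "r (E - {f0, f1, f3}) = r E" using rank_le_rank_E[of "E - {f0, f1, f3}"] by simp
  txt \<open>The triads \<open>{f0, f1, f2}\<close> and \<open>{f2, f3, f4}\<close> meet in \<open>f2\<close>; submodularity shows that removing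
    all five elements lowers the rank by 2.\<close>
  have "r ((E - {f0, f1, f2}) \<union> (E - {f2, f3, f4})) + r ((E - {f0, f1, f2}) \<inter> (E - {f2, f3, f4}))
     \<le> r (E - {f0, f1, f2}) + r (E - {f2, f3, f4})" by (rule rank_submod) auto
  moreover have "(E - {f0, f1, f2}) \<union> (E - {f2, f3, f4}) = E - {f2}" using d by auto
  moreover have "(E - {f0, f1, f2}) \<inter> (E - {f2, f3, f4}) = E - {f0, f1, f2, f3, f4}" by auto
  ultimately have R5: "r (E - {f0, f1, f2, f3, f4}) + 2 \<le> r E"
    using rank_Diff_singleton[of f2] inE triadD(3)[OF T1] triadD(3)[OF T3] by simp
  have "E - {f0, f1, f3, f4} = insert f2 (E - {f0, f1, f2, f3, f4})" using inE d by auto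
  then have "r (E - {f0, f1, f3, f4}) < r E"
    using rank_insert_le[of "E - {f0, f1, f2, f3, f4}" f2] inE R5 by auto
  moreover have "insert f4 (E - {f0, f1, f3, f4}) = E - {f0, f1, f3}" using inE d by auto
  ultimately show ?thesis using S1 unfolding f0_f1_f2_f3_f4_def by simp
qed

section \<open>Contracting one element of the flan\<close>

lemma first_index_facts:
  assumes "c < 3"
  shows "fs ! c \<in> E" "fs ! c \<in> Fk 4" "fs ! c \<in> {fs ! 0, fs ! 1, fs ! 2}"
proof -
  show "fs ! c \<in> E" using assms nth_in_E length_ge4 by simp
  show "fs ! c \<in> Fk 4" using assms nth_in_Fk_iff[of c 4] length_ge4 by simp
  show "fs ! c \<in> {fs ! 0, fs ! 1, fs ! 2}" using assms by (auto simp: less_Suc_eq numeral_nat)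
qed

lemma Fk4_minus_spanning_triple:
  assumes c: "c < 3" and nt: "\<not> in_triangle M (fs ! c)"
  shows "Fk 4 - {fs ! c} \<subseteq> E - {fs ! c}" "card (Fk 4 - {fs ! c}) = 3"
    "\<And>x K. x \<in> Fk 4 - {fs ! c} \<Longrightarrow> fs ! c \<in> K \<Longrightarrow> K \<subseteq> E \<Longrightarrow>
      r (insert x ((Fk 4 - {fs ! c} - {x}) \<union> K)) = r ((Fk 4 - {fs ! c} - {x}) \<union> K)"
proof -
  let ?a = "fs ! c" and ?P = "Fk 4 - {fs ! c}"
  have F4E: "Fk 4 \<subseteq> E" using Fk_sub_E length_ge4 by simp
  have finF: "finite (Fk 4)" using F4E finite_E finite_subset by blast
  note a = first_index_facts[OF c]
  show "?P \<subseteq> E - {?a}" using F4E by auto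
  show c3: "card ?P = 3" using card_Fk[of 4] length_ge4 a finF by simp
  fix x K assume x: "x \<in> ?P" and K: "?a \<in> K" "K \<subseteq> E"
  have "card (?P - {x}) = 2" using c3 x finF by simp
  then obtain y z where yz: "?P - {x} = {y, z}" "y \<noteq> z" by (meson card_2_iff)
  have yzE: "y \<in> E" "z \<in> E" "y \<noteq> ?a" "z \<noteq> ?a" using yz F4E by auto
  have "r {y, z, ?a} = 3" using rank_triple_if_not_in_triangle[OF nt yzE(1,2) a(1) yz(2) yzE(3,4)] .
  moreover have "(?P - {x}) \<union> {?a} = {y, z, ?a}" using yz by auto
  moreover have "insert x {y, z, ?a} = Fk 4" using yz x a by auto
  moreover have "r {y, z, ?a} \<le> r (Fk 4)" by (rule rank_mono) (use yz F4E a in auto)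
  ultimately have "r (insert x ((?P - {x}) \<union> {?a})) = r ((?P - {x}) \<union> {?a})"
    using rank_Fk4_le3 by simp
  then show "r (insert x ((?P - {x}) \<union> K)) = r ((?P - {x}) \<union> K)"
    by (rule matroid_spanned_mono[OF matroid, rotated -1]) (use K F4E x in auto)
qed

lemma three_connected_contr_first:
  assumes c: "c < 3" and nt: "\<not> in_triangle M (fs ! c)"
  shows "three_connected (contr {fs ! c})"
proof (rule three_connected_contr)
  let ?a = "fs ! c"
  note a = first_index_facts[OF c]
  note P = Fk4_minus_spanning_triple[OF c nt]
  show "{?a} \<subseteq> E" using a by simp
  show "r E + r {?a} + 1 \<le> r (X \<union> {?a}) + r (E - X)"
    if "X \<subseteq> E - {?a}" "X \<noteq> {}" "E - {?a} - X \<noteq> {}" for X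
    by (rule contr_singleton_conn1[OF a(1) that])
  show "\<not> two_sep {?a} X" for X
  proof
    assume s: "two_sep {?a} X"
    have "Z \<inter> (Fk 4 - {?a}) \<noteq> {}" if "two_sep {?a} Z" for Z
    proof -
      have "Z \<inter> {fs ! 0, fs ! 1, fs ! 2} \<noteq> {}"
        using two_sep_singleton_meets_triad[OF a(1) that triad_first a(3)] .
      moreover have "Z \<subseteq> E - {?a}" using that unfolding two_sep_def by auto
      ultimately show ?thesis using Fk3_eq Fk4_eq by auto
    qed
    moreover have "3 \<le> card X" "3 \<le> card (E - {?a} - X)"
      using two_sep_singleton_card_ge3[OF a(1) nt] s two_sep_compl[of "{?a}", OF _ s] a(1) by auto
    ultimately have "\<not> two_sep {?a} X"
      using no_two_sep_if_spanning_triple[OF _ P(1,2) P(3)] a(1) by blast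
    then show False using s by contradiction
  qed
qed

text \<open>The sequence along which a 2-separation is grown: two elements \<open>p, q\<close> of one side and the
  third element \<open>s\<close> of \<open>F\<^sub>3\<close> (for \<open>d = 0\<close>) or of \<open>F\<^sub>4 - {f\<^sub>i}\<close> (for \<open>d = 1\<close>), followed by
  \<open>fs ! (3 + d), fs ! (4 + d), \<dots>\<close>\<close>

definition relabel :: "'a \<Rightarrow> 'a \<Rightarrow> 'a \<Rightarrow> nat \<Rightarrow> nat \<Rightarrow> 'a" where
  "relabel p q s d l = (if l = 0 then p else if l = 1 then q else if l = 2 then s else fs ! (l + d))"

lemma relabel_image_2: "relabel p q s d ` {..<2} = {p, q}"
  by (auto simp: relabel_def lessThan_Suc numeral_2_eq_2)

lemma relabel_image:
  assumes "3 \<le> l"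
  shows "relabel p q s d ` {..<l} = {p, q, s} \<union> (!) fs ` {3 + d..<l + d}"
proof -
  have u: "{..<l} = {0, 1, 2} \<union> {3..<l}" using assms by auto
  have "relabel p q s d ` {3..<l} = (\<lambda>i. fs ! (i + d)) ` {3..<l}"
    unfolding relabel_def by (intro image_cong) auto
  also have "\<dots> = (!) fs ` ((\<lambda>i. i + d) ` {3..<l})" by (simp only: image_image)
  also have "\<dots> = (!) fs ` {3 + d..<l + d}" by (simp only: image_add_atLeastLessThan')
  finally show ?thesis unfolding u image_Un by (auto simp: relabel_def)
qed

lemma growth_step_along_flan:
  assumes "g l = fs ! k" "g ` {..<l} = G" "G \<subseteq> Fk k" "Fk k \<subseteq> G \<union> K" "K \<subseteq> E"
    "3 \<le> k" "k < t" and even_case: "even k \<Longrightarrow> r (E - G) \<noteq> r (E - insert (fs ! k) G)"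
  shows "growth_step K X g l"
proof (cases "odd k")
  case True
  have "r (insert (fs ! k) (G \<union> K)) = r (G \<union> K)"
    by (rule matroid_spanned_mono[OF matroid _ _ _ spanned_at_odd[OF True]])
      (use assms Fk_sub_E[of k] nth_in_E in auto)
  then show ?thesis using assms(1,2) unfolding growth_step_def by simp
qed (use assms in \<open>simp add: growth_step_def\<close>)

lemma relabel_image_Fk:
  assumes "Fk 3 = {p, q, s}" "3 \<le> l"
  shows "relabel p q s 0 ` {..<l} = Fk l"
proof -
  have "{..<l} = {..<3} \<union> {3..<l}" using assms(2) by auto
  then have "Fk l = Fk 3 \<union> (!) fs ` {3..<l}" unfolding Fk_def by (simp add: image_Un)
  then show ?thesis using relabel_image[OF assms(2)] assms(1) by simp
qed

lemma growth_step_contract_even: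
  assumes n: "even n" "4 \<le> n" "n < t"
    and P: "Fk 3 = {p, q, s}" "s \<notin> {p, q}" and pq: "p \<in> X" "q \<in> X" and l: "l < n"
  shows "growth_step {fs ! n} X (relabel p q s 0) l"
proof -
  consider "l < 2" | "l = 2" | "3 \<le> l" by linarith
  then show ?thesis
  proof cases
    case 1 then show ?thesis using pq unfolding growth_step_def relabel_def by auto
  next
    case 2
    have "r (E - ({p, q, s} - {s})) = r E" "r (E - {p, q, s}) < r E"
      using triadD(3)[OF triad_first] triadD(4)[OF triad_first, of s] Fk3_eq P(1) by auto
    moreover have "{p, q, s} - {s} = {p, q}" using P(2) by auto
    ultimately show ?thesis using 2 relabel_image_2[of p q s 0]
      unfolding growth_step_def by (auto simp: relabel_def insert_commute)
  next
    case 3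
    show ?thesis
    proof (rule growth_step_along_flan)
      show "relabel p q s 0 l = fs ! l" using 3 unfolding relabel_def by auto
      show "relabel p q s 0 ` {..<l} = Fk l" by (rule relabel_image_Fk[OF P(1) 3])
    qed (use 3 l n nth_in_E corank_drop_at_even[of l "Fk l"] nth_in_Fk_iff in auto)
  qed
qed

lemma two_sep_even_side_not_two_of_Fk3:
  assumes n: "even n" "4 \<le> n" "n < t" and nt: "\<not> in_triangle M (fs ! n)"
    and s: "two_sep {fs ! n} X" and pq: "p \<in> Fk 3 \<inter> X" "q \<in> Fk 3 \<inter> X" "p \<noteq> q"
  shows False
proof -
  define e where "e = fs ! n"
  have e: "e \<in> E" "e \<notin> Fk 3" "{e} \<subseteq> E"
    unfolding e_def using nth_in_E nth_in_Fk_iff[of n 3] n by auto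
  have F3E: "Fk 3 \<subseteq> E" using Fk_sub_E length_ge4 by simp
  have "finite (Fk 3)" using F3E finite_E finite_subset by blast
  then have "card (Fk 3 - {p, q}) = 1" using card_Fk[of 3] length_ge4 pq by (simp add: card_Diff_subset)
  then obtain s0 where "Fk 3 - {p, q} = {s0}" by (auto simp: card_Suc_eq)
  then have P: "Fk 3 = {p, q, s0}" "s0 \<notin> {p, q}" using pq by auto
  define g where "g = relabel p q s0 0"
  have gE: "g l \<in> E - {e}" if "l < n" for l
  proof (cases "l < 3")
    case True
    then have "g l \<in> Fk 3" unfolding g_def relabel_def P(1) by auto
    then show ?thesis using F3E e by auto
  next
    case False
    then show ?thesis
      using nth_in_E nth_neq[of l n] that n unfolding g_def relabel_def e_def by auto
  qed
  obtain X' where X': "two_sep {e} X'" "card (E - {e} - X') = 2 \<or> g ` {..<n} \<subseteq> X'"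
    using two_sep_grow[OF e(3) s[folded e_def] gE growth_step_contract_even[OF n P, folded e_def g_def]] pq
    by blast
  have compl: "two_sep {e} (E - {e} - X')" by (rule two_sep_compl[OF e(3) X'(1)])
  then have "3 \<le> card (E - {e} - X')"
    using two_sep_singleton_card_ge3[OF e(1)] nt unfolding e_def by simp
  then have "Fk n \<subseteq> X'" using X'(2) relabel_image_Fk[OF P(1), of n] n unfolding g_def by auto
  then have "fs ! (n - 2) \<in> X'" "fs ! (n - 1) \<in> X'" using nth_in_Fk_iff n by auto
  then have "(E - {e} - X') \<inter> {fs ! (n - 2), fs ! (n - 1), e} = {}" by auto
  moreover have "triad M {fs ! (n - 2), fs ! (n - 1), e}" using triad_ending_at n unfolding e_def by simp
  ultimately show False using two_sep_singleton_meets_triad[OF e(1) compl] by auto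
qed

lemma three_connected_contr_even:
  assumes n: "even n" "4 \<le> n" "n < t" and nt: "\<not> in_triangle M (fs ! n)"
  shows "three_connected (contr {fs ! n})"
proof (rule three_connected_contr)
  let ?e = "fs ! n"
  have e: "?e \<in> E" "?e \<notin> Fk 3" using nth_in_E nth_in_Fk_iff[of n 3] n by auto
  show "{?e} \<subseteq> E" using e by simp
  show "r E + r {?e} + 1 \<le> r (X \<union> {?e}) + r (E - X)"
    if "X \<subseteq> E - {?e}" "X \<noteq> {}" "E - {?e} - X \<noteq> {}" for X
    by (rule contr_singleton_conn1[OF e(1) that])
  show "\<not> two_sep {?e} X" for X
  proof (rule no_two_sep_if_no_side_holds_pair)
    show "Fk 3 \<subseteq> E - {?e}" using Fk_sub_E[of 3] length_ge4 e by auto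
    show "card (Fk 3) = 3" using card_Fk length_ge4 by simp
    fix Y assume Y: "two_sep {?e} Y" "2 \<le> card (Fk 3 \<inter> Y)"
    obtain p q where "p \<in> Fk 3 \<inter> Y" "q \<in> Fk 3 \<inter> Y" "p \<noteq> q"
      using two_elements_of_card_ge2[OF Y(2)] .
    then show False using two_sep_even_side_not_two_of_Fk3[OF n nt Y(1)] by blast
  qed (use e in auto)
qed

section \<open>Contracting two elements of the flan\<close>

lemma index_pair_facts:
  assumes c: "c < 3" and n: "4 \<le> n" "n < t"
  shows "fs ! c \<in> E" "fs ! n \<in> E" "fs ! c \<noteq> fs ! n" "fs ! n \<notin> Fk 4"
    "fs ! n \<notin> {fs ! 0, fs ! 1, fs ! 2}"
  using assms nth_in_E nth_neq[of c n] nth_in_Fk_iff[of n 4] Fk3_eq Fk4_eq by auto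

lemma small_side_facts:
  assumes c: "c < 3" and nta: "\<not> in_triangle M (fs ! c)"
    and n: "4 \<le> n" "n < t" and ntb: "\<not> in_triangle M (fs ! n)"
    and y: "y1 \<in> E - {fs ! c, fs ! n}" "y2 \<in> E - {fs ! c, fs ! n}" "y1 \<noteq> y2"
      "r ({y1, y2} \<union> {fs ! c, fs ! n}) \<le> 3"
  shows "y1 \<in> Fk 3 \<or> y2 \<in> Fk 3"
    "r (insert (fs ! n) {y1, y2, fs ! c}) = r {y1, y2, fs ! c}"
    "\<And>y y'. {y, y'} = {y1, y2} \<Longrightarrow> r (insert y' {y, fs ! c, fs ! n}) = r {y, fs ! c, fs ! n}"
proof -
  define a b where "a = fs ! c" "b = fs ! n"
  note ab = index_pair_facts[OF c n, folded a_b_def]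
  have yy: "y1 \<in> E" "y2 \<in> E" "y1 \<noteq> a" "y1 \<noteq> b" "y2 \<noteq> a" "y2 \<noteq> b"
    using y unfolding a_b_def by auto
  have r4: "r {y1, y2, b, a} \<le> 3" using y unfolding a_b_def by (simp add: insert_commute)
  have "r {y1, y2, a} = 3" "r {y1, y2, b} = 3"
    using rank_triple_if_not_in_triangle[OF nta] rank_triple_if_not_in_triangle[OF ntb] yy ab y
    unfolding a_b_def by auto
  moreover have "{y1, y2, b, a} = {y1, y2, a, b}" by auto
  ultimately have spanned_a: "r (insert a {y1, y2, b}) = r {y1, y2, b}"
    and spanned_b: "r (insert b {y1, y2, a}) = r {y1, y2, a}"
    using rank_insert_le3_spanned[of y1 y2 b a] rank_insert_le3_spanned[of y1 y2 a b] yy ab r4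
    by simp_all
  show "r (insert (fs ! n) {y1, y2, fs ! c}) = r {y1, y2, fs ! c}" using spanned_b unfolding a_b_def .
  txt \<open>\<open>a\<close> lies in the first triad and is spanned by \<open>{y\<^sub>1, y\<^sub>2, b}\<close>, so that set meets the triad.\<close>
  have "\<not> {y1, y2, b} \<subseteq> E - {fs ! 0, fs ! 1, fs ! 2}"
  proof
    assume "{y1, y2, b} \<subseteq> E - {fs ! 0, fs ! 1, fs ! 2}"
    then show False
      using rank_insert_triad[OF triad_first first_index_facts(3)[OF c]] spanned_a
      unfolding a_b_def by simp
  qed
  then show "y1 \<in> Fk 3 \<or> y2 \<in> Fk 3" using yy ab Fk3_eq by auto
  fix y y' assume yin: "{y, y'} = {y1, y2}"
  then have yE: "y \<in> E" "y \<noteq> b" "y \<noteq> a" "y' \<in> E" "y \<noteq> y'" using yy y(3) by auto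
  have "r {y, b, a} = 3"
    using rank_triple_if_not_in_triangle[OF nta[folded a_b_def(1)] yE(1) ab(2,1) yE(2,3)] ab(3)
    by simp
  moreover have "{y1, y2, b, a} = {y, y', b, a}" using yin by blast
  ultimately have "r (insert y' {y, b, a}) = r {y, b, a}"
    using rank_insert_le3_spanned[of y b a y'] r4 yE ab by (simp add: insert_commute)
  then show "r (insert y' {y, fs ! c, fs ! n}) = r {y, fs ! c, fs ! n}"
    unfolding a_b_def by (simp add: insert_commute)
qed

lemma no_small_side_ge6:
  assumes c: "c < 3" and nta: "\<not> in_triangle M (fs ! c)"
    and n: "even n" "6 \<le> n" "n < t" and ntb: "\<not> in_triangle M (fs ! n)"
    and y: "y1 \<in> E - {fs ! c, fs ! n}" "y2 \<in> E - {fs ! c, fs ! n}" "y1 \<noteq> y2"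
      "r ({y1, y2} \<union> {fs ! c, fs ! n}) \<le> 3"
  shows False
proof -
  have n4: "4 \<le> n" using n by simp
  note side = small_side_facts[OF c nta n4 n(3) ntb y]
  have T: "triad M {fs ! (n - 2), fs ! (n - 1), fs ! n}" using triad_ending_at n by simp
  have a_notin: "fs ! c \<notin> {fs ! (n - 2), fs ! (n - 1), fs ! n}"
    using nth_neq[of c "n - 2"] nth_neq[of c "n - 1"] nth_neq[of c n] c n by auto
  txt \<open>\<open>f\<^sub>j\<close> is spanned by \<open>{y\<^sub>1, y\<^sub>2, f\<^sub>i}\<close>, so this set meets the triad ending at \<open>f\<^sub>j\<close>.\<close>
  have "\<not> {y1, y2, fs ! c} \<subseteq> E - {fs ! (n - 2), fs ! (n - 1), fs ! n}"
  proof
    assume "{y1, y2, fs ! c} \<subseteq> E - {fs ! (n - 2), fs ! (n - 1), fs ! n}"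
    then show False using rank_insert_triad[OF T, of "fs ! n"] side(2) by simp
  qed
  then have "y1 \<in> {fs ! (n - 2), fs ! (n - 1)} \<or> y2 \<in> {fs ! (n - 2), fs ! (n - 1)}"
    using y a_notin first_index_facts(1)[OF c] by auto
  moreover have "fs ! (n - 2) \<notin> Fk 3" "fs ! (n - 1) \<notin> Fk 3" using nth_in_Fk_iff n by auto
  moreover have "Fk 3 \<union> {fs ! (n - 2), fs ! (n - 1)} \<subseteq> Fk n" "fs ! c \<in> Fk n"
    using Fk_mono[of 3 n] nth_in_Fk_iff[of "n - 2" n] nth_in_Fk_iff[of "n - 1" n]
      nth_in_Fk_iff[of c n] c n by auto
  ultimately have "{y1, y2, fs ! c} \<subseteq> Fk n" using side(1) by blast
  then have "r (insert (fs ! n) (Fk n)) = r (Fk n)"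
    using matroid_spanned_mono[OF matroid _ _ _ side(2)] Fk_sub_E[of n] nth_in_E n by auto
  then show False using not_spanned_at_even n by simp
qed

lemma no_small_side_len5:
  assumes c: "c < 3" and nta: "\<not> in_triangle M (fs ! c)"
    and t5: "t = 5" and ntb: "\<not> in_triangle M (fs ! 4)"
    and y: "y1 \<in> E - {fs ! c, fs ! 4}" "y2 \<in> E - {fs ! c, fs ! 4}" "y1 \<noteq> y2"
      "r ({y1, y2} \<union> {fs ! c, fs ! 4}) \<le> 3"
  shows False
proof -
  have n: "4 \<le> (4::nat)" "4 < t" using t5 by auto
  note side = small_side_facts[OF c nta n ntb y]
  have F5: "F = insert (fs ! 4) (Fk 4)" using F_eq_Fk t5 Fk_Suc[of 4] by (simp add: numeral_eq_Suc)
  have aF4: "fs ! c \<in> Fk 4" using first_index_facts(2)[OF c] .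
  obtain u u' where uu: "{u, u'} = {y1, y2}" "u \<in> Fk 3"
  proof (cases "y1 \<in> Fk 3")
    case True
    then show ?thesis using that[of y1 y2] by simp
  next
    case False
    then show ?thesis using that[of y2 y1] side(1) t5 by (simp add: insert_commute)
  qed
  have u': "u' \<in> E" "u' \<noteq> fs ! 4" using uu y by auto
  have uF4: "u \<in> Fk 4" using uu(2) Fk_mono[of 3 4] by auto
  show False
  proof (cases "u' \<in> F")
    case True
    txt \<open>Then \<open>{y\<^sub>1, y\<^sub>2, f\<^sub>i} \<subseteq> F\<^sub>4\<close> spans \<open>f\<^sub>5\<close>.\<close>
    then have "{y1, y2, fs ! c} \<subseteq> Fk 4" using F5 u' uF4 aF4 uu(1) by auto
    then have "r (insert (fs ! 4) (Fk 4)) = r (Fk 4)"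
      using matroid_spanned_mono[OF matroid _ _ _ side(2)] Fk_sub_E[of 4] nth_in_E t5 by auto
    then show False using not_spanned_at_even[of 4] t5 by simp
  next
    case False
    txt \<open>Otherwise \<open>u'\<close> is spanned by \<open>F\<close> and \<open>F \<union> {u'}\<close> would be a larger flan.\<close>
    have "r (insert u' {u, fs ! c, fs ! 4}) = r {u, fs ! c, fs ! 4}"
      using side(3)[OF uu(1)] t5 by simp
    moreover have "{u, fs ! c, fs ! 4} \<subseteq> F" using uF4 aF4 F5 by auto
    ultimately have "r (insert u' F) = r F"
      using matroid_spanned_mono[OF matroid _ F_sub_E u'(1)] by blast
    then show False using not_spanned_by_F_if_odd[OF _ u'(1) False] t5 by simp
  qed
qed

lemma no_two_sep_with_f5_big_sides:
  assumes c: "c < 3" and nta: "\<not> in_triangle M (fs ! c)" and t5: "5 \<le> t"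
    and big: "3 \<le> card X" "3 \<le> card (E - {fs ! c, fs ! 4} - X)"
  shows "\<not> two_sep {fs ! c, fs ! 4} X"
proof -
  define a b where "a = fs ! c" "b = fs ! 4"
  have n4: "4 \<le> (4::nat)" "4 < t" using t5 by auto
  note ab = index_pair_facts[OF c n4, folded a_b_def]
  note P = Fk4_minus_spanning_triple[OF c nta, folded a_b_def]
  have tc: "three_connected (contr {a})" using three_connected_contr_first[OF c nta] a_b_def by simp
  have fi: "fs ! 0 \<in> E" "fs ! 1 \<in> E" "fs ! 2 \<in> E" "fs ! 3 \<in> E" "fs ! 4 \<in> E"
    by (rule nth_in_E, use t5 in linarith)+
  have meets: "Z \<inter> (Fk 4 - {a}) \<noteq> {}" if Z: "two_sep {a, b} Z" for Z
  proof
    assume disj: "Z \<inter> (Fk 4 - {a}) = {}"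
    have Zs: "Z \<subseteq> E - {a, b}" using Z unfolding two_sep_def by auto
    show False
    proof (cases "c = 2")
      case True
      txt \<open>Here \<open>f\<^sub>3\<close> is contracted, and \<open>{f\<^sub>1, f\<^sub>2, f\<^sub>4, f\<^sub>5}\<close> plays the role of a triad through \<open>f\<^sub>5\<close>.\<close>
      have d: "a \<noteq> fs ! 0" "a \<noteq> fs ! 1" "a \<noteq> fs ! 3" "a \<noteq> fs ! 4" unfolding a_b_def True
        by (rule nth_neq, use t5 in linarith, use t5 in linarith, simp)+
      have "Z \<inter> {fs ! 0, fs ! 1, fs ! 3, fs ! 4} \<noteq> {}"
        using two_sep_doubleton_meets[OF ab(1,2,3) tc Z, of "{fs ! 0, fs ! 1, fs ! 3, fs ! 4}"]
          not_spanned_f4_compl[OF t5] fi d unfolding a_b_def by auto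
      then show False using disj Zs d Fk4_eq unfolding a_b_def by auto
    next
      case False
      have T: "triad M {fs ! 2, fs ! 3, fs ! 4}" using triad_at[of 2] t5 by simp
      have d: "a \<noteq> fs ! 2" "a \<noteq> fs ! 3" "a \<noteq> fs ! 4"
        unfolding a_b_def using False c nth_neq t5 by auto
      have "Z \<inter> {fs ! 2, fs ! 3, fs ! 4} \<noteq> {}"
        using two_sep_doubleton_meets[OF ab(1,2,3) tc Z triadD(1)[OF T]]
          triad_not_spanned_compl[OF T] d unfolding a_b_def by auto
      then show False using disj Zs d Fk4_eq unfolding a_b_def by auto
    qed
  qed
  show ?thesis unfolding a_b_def[symmetric]
    by (rule no_two_sep_if_spanning_triple[OF _ _ P(2) P(3) meets big[folded a_b_def]])
      (use ab P(1) in auto)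
qed

lemma corank_drop_at_even_without_first:
  assumes c: "c < 3" and k: "even k" "4 \<le> k" "k < t"
  shows "r (E - (Fk k - {fs ! c})) \<noteq> r (E - insert (fs ! k) (Fk k - {fs ! c}))"
proof (cases "k = 4 \<and> c = 2")
  case True
  have t5: "5 \<le> t" using True k by simp
  have fi: "fs ! 0 \<in> E" "fs ! 1 \<in> E" "fs ! 3 \<in> E" "fs ! 4 \<in> E"
    by (rule nth_in_E, use t5 in linarith)+
  have d: "fs ! 2 \<noteq> fs ! 0" "fs ! 2 \<noteq> fs ! 1" "fs ! 2 \<noteq> fs ! 3"
    by (rule nth_neq, use t5 in linarith, use t5 in linarith, simp)+
  show ?thesis
  proof (rule corank_drop_if_not_spanned[of _ _ "{fs ! 0, fs ! 1, fs ! 3, fs ! 4}"])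
    show "{fs ! 0, fs ! 1, fs ! 3, fs ! 4} \<subseteq> insert (fs ! k) (Fk k - {fs ! c})"
      using True Fk4_eq d by auto
    show "r (insert (fs ! k) (E - {fs ! 0, fs ! 1, fs ! 3, fs ! 4})) \<noteq> r (E - {fs ! 0, fs ! 1, fs ! 3, fs ! 4})"
      using not_spanned_f4_compl[OF t5] True by simp
  qed (use fi Fk_sub_E[of k] k nth_in_E nth_in_Fk_iff[of k k] in auto)
next
  case False
  then have "k - 2 \<noteq> c" "k - 1 \<noteq> c" using k c by auto
  then have "fs ! (k - 2) \<noteq> fs ! c" "fs ! (k - 1) \<noteq> fs ! c" using nth_neq k c by auto
  then show ?thesis using corank_drop_at_even[OF k, of "Fk k - {fs ! c}"] nth_in_Fk_iff k by auto
qed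

lemma relabel_image_Fk_minus:
  assumes c: "c < 3" and P: "Fk 4 - {fs ! c} = {p, q, s}" and l: "3 \<le> l" "l < t"
  shows "relabel p q s 1 ` {..<l} = Fk (l + 1) - {fs ! c}"
proof -
  have "{..<l + 1} = {..<4} \<union> {4..<l + 1}" using l by auto
  then have "Fk (l + 1) = Fk 4 \<union> (!) fs ` {4..<l + 1}" unfolding Fk_def by (simp add: image_Un)
  moreover have "fs ! c \<notin> (!) fs ` {4..<l + 1}"
  proof
    assume "fs ! c \<in> (!) fs ` {4..<l + 1}"
    then obtain i where "4 \<le> i" "i < l + 1" "fs ! c = fs ! i" by auto
    then show False using nth_neq[of i c] l c by simp
  qed
  ultimately have "Fk (l + 1) - {fs ! c} = (Fk 4 - {fs ! c}) \<union> (!) fs ` {4..<l + 1}" by blast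
  then show ?thesis using relabel_image[OF l(1)] P by simp
qed

lemma growth_step_contract_pair:
  assumes c: "c < 3" and nta: "\<not> in_triangle M (fs ! c)" and n: "even n" "6 \<le> n" "n < t"
    and P: "Fk 4 - {fs ! c} = {p, q, s}" "s \<notin> {p, q}" and pq: "p \<in> X" "q \<in> X"
    and l: "l < n - 1"
  shows "growth_step {fs ! c, fs ! n} X (relabel p q s 1) l"
proof -
  have K: "{fs ! c, fs ! n} \<subseteq> E" using nth_in_E c n by simp
  consider "l < 2" | "l = 2" | "3 \<le> l" by linarith
  then show ?thesis
  proof cases
    case 1 then show ?thesis using pq unfolding growth_step_def relabel_def by auto
  next
    case 2
    have "Fk 4 - {fs ! c} - {s} = {p, q}" "s \<in> Fk 4 - {fs ! c}" using P by auto
    then have "r (insert s ({p, q} \<union> {fs ! c, fs ! n})) = r ({p, q} \<union> {fs ! c, fs ! n})"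
      using Fk4_minus_spanning_triple(3)[OF c nta, of s "{fs ! c, fs ! n}"] K by auto
    then show ?thesis using 2 relabel_image_2[of p q s 1]
      unfolding growth_step_def by (simp add: relabel_def)
  next
    case 3
    show ?thesis
    proof (rule growth_step_along_flan)
      show "relabel p q s 1 l = fs ! (l + 1)" using 3 unfolding relabel_def by auto
      show "relabel p q s 1 ` {..<l} = Fk (l + 1) - {fs ! c}"
        using relabel_image_Fk_minus[OF c P(1) 3] l n by simp
      show "even (l + 1) \<Longrightarrow>
          r (E - (Fk (l + 1) - {fs ! c})) \<noteq> r (E - insert (fs ! (l + 1)) (Fk (l + 1) - {fs ! c}))"
        using corank_drop_at_even_without_first[OF c, of "l + 1"] 3 l n by simp
    qed (use 3 l n K first_index_facts(2)[OF c] Fk_mono[of 4 "l + 1"] in auto)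
  qed
qed

lemma relabel_in_E_minus_pair:
  assumes c: "c < 3" and n: "4 \<le> n" "n < t" and P: "Fk 4 - {fs ! c} = {p, q, s}"
    and l: "l < n - 1"
  shows "relabel p q s 1 l \<in> E - {fs ! c, fs ! n}"
proof (cases "l < 3")
  case True
  then have "relabel p q s 1 l \<in> Fk 4 - {fs ! c}" unfolding relabel_def P by auto
  then show ?thesis using Fk_sub_E[of 4] length_ge4 index_pair_facts[OF c n] by auto
next
  case False
  have "fs ! (l + 1) \<noteq> fs ! c" "fs ! (l + 1) \<noteq> fs ! n"
    using nth_neq[of "l + 1" c] nth_neq[of "l + 1" n] l n c False by auto
  then show ?thesis using False nth_in_E[of "l + 1"] l n unfolding relabel_def by auto
qed

lemma two_sep_ge6_side_not_two_of_Fk4: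
  assumes c: "c < 3" and nta: "\<not> in_triangle M (fs ! c)"
    and n: "even n" "6 \<le> n" "n < t" and ntb: "\<not> in_triangle M (fs ! n)"
    and s: "two_sep {fs ! c, fs ! n} X"
    and pq: "p \<in> (Fk 4 - {fs ! c}) \<inter> X" "q \<in> (Fk 4 - {fs ! c}) \<inter> X" "p \<noteq> q"
  shows False
proof -
  define a b where "a = fs ! c" "b = fs ! n"
  have n4: "4 \<le> n" using n by simp
  note ab = index_pair_facts[OF c n4 n(3), folded a_b_def]
  note Ptriple = Fk4_minus_spanning_triple[OF c nta, folded a_b_def]
  have K: "{a, b} \<subseteq> E" using ab by simp
  have tc: "three_connected (contr {a})" using three_connected_contr_first[OF c nta] a_b_def by simp
  have "finite (Fk 4 - {a})" using Ptriple(2) by (metis card.infinite zero_neq_numeral)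
  then have "card (Fk 4 - {a} - {p, q}) = 1" using Ptriple(2) pq unfolding a_b_def
    by (simp add: card_Diff_subset)
  then obtain s0 where "Fk 4 - {a} - {p, q} = {s0}" by (auto simp: card_Suc_eq)
  then have P: "Fk 4 - {a} = {p, q, s0}" "s0 \<notin> {p, q}" using pq unfolding a_b_def by auto
  define g where "g = relabel p q s0 1"
  have gE: "g l \<in> E - {a, b}" if "l < n - 1" for l
    using relabel_in_E_minus_pair[OF c n4 n(3) P(1)[unfolded a_b_def] that]
    unfolding g_def a_b_def .
  obtain X' where X': "two_sep {a, b} X'" "card (E - {a, b} - X') = 2 \<or> g ` {..<n - 1} \<subseteq> X'"
    using two_sep_grow[OF K s[folded a_b_def] gE
        growth_step_contract_pair[OF c nta n P[unfolded a_b_def], folded a_b_def g_def]] pq by blast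
  have compl: "two_sep {a, b} (E - {a, b} - X')" by (rule two_sep_compl[OF K X'(1)])
  show False
  proof (cases "card (E - {a, b} - X') = 2")
    case True
    txt \<open>A two-element side would give a parallel pair in the double contraction.\<close>
    then obtain y1 y2 where yy: "E - {a, b} - X' = {y1, y2}" "y1 \<noteq> y2" by (meson card_2_iff)
    have "r ({y1, y2} \<union> {a, b}) \<le> 3"
      using two_sep_doubleton_card2_rank[OF ab(1,2,3) compl True] yy by simp
    then show False using no_small_side_ge6[OF c nta n ntb, of y1 y2] yy unfolding a_b_def by auto
  next
    case False
    then have "Fk n - {a} \<subseteq> X'"
      using X'(2) relabel_image_Fk_minus[OF c P(1)[unfolded a_b_def], of "n - 1"] n
      unfolding g_def a_b_def by simp
    moreover have T: "triad M {fs ! (n - 2), fs ! (n - 1), b}"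
      using triad_ending_at n unfolding a_b_def by simp
    moreover have "fs ! (n - 2) \<noteq> a" "fs ! (n - 1) \<noteq> a" "fs ! (n - 2) \<in> Fk n" "fs ! (n - 1) \<in> Fk n"
      unfolding a_b_def using nth_neq nth_in_Fk_iff n c by auto
    ultimately have "(E - {a, b} - X') \<inter> {fs ! (n - 2), fs ! (n - 1), b} = {}"
      and "a \<notin> {fs ! (n - 2), fs ! (n - 1), b}" using ab by auto
    then show False
      using two_sep_doubleton_meets[OF ab(1,2,3) tc compl triadD(1)[OF T] _ _
          triad_not_spanned_compl[OF T]] by simp
  qed
qed

lemma no_two_sep_ge6:
  assumes c: "c < 3" and nta: "\<not> in_triangle M (fs ! c)"
    and n: "even n" "6 \<le> n" "n < t" and ntb: "\<not> in_triangle M (fs ! n)"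
  shows "\<not> two_sep {fs ! c, fs ! n} X"
proof (rule no_two_sep_if_no_side_holds_pair)
  have n4: "4 \<le> n" using n by simp
  note ab = index_pair_facts[OF c n4 n(3)]
  show "{fs ! c, fs ! n} \<subseteq> E" using ab n by simp
  show "Fk 4 - {fs ! c} \<subseteq> E - {fs ! c, fs ! n}" using Fk_sub_E[of 4] length_ge4 ab n by auto
  show "card (Fk 4 - {fs ! c}) = 3" using Fk4_minus_spanning_triple(2)[OF c nta] .
  fix Y assume Y: "two_sep {fs ! c, fs ! n} Y" "2 \<le> card ((Fk 4 - {fs ! c}) \<inter> Y)"
  obtain p q where "p \<in> (Fk 4 - {fs ! c}) \<inter> Y" "q \<in> (Fk 4 - {fs ! c}) \<inter> Y" "p \<noteq> q"
    using two_elements_of_card_ge2[OF Y(2)] .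
  then show False using two_sep_ge6_side_not_two_of_Fk4[OF c nta n ntb Y(1)] by blast
qed

lemma three_connected_contract_contract_ge6:
  assumes c: "c < 3" and nta: "\<not> in_triangle M (fs ! c)"
    and n: "even n" "6 \<le> n" "n < t" and ntb: "\<not> in_triangle M (fs ! n)"
  shows "three_connected (contract (contract M (fs ! c)) (fs ! n))"
  using index_pair_facts[OF c _ n(3)] n
  by (intro three_connected_contract_contract_if_no_two_sep nta
      three_connected_contr_first[OF c nta] no_two_sep_ge6[OF c nta n ntb]) auto

lemma three_connected_contract_contract_len5:
  assumes c: "c < 3" and nta: "\<not> in_triangle M (fs ! c)"
    and t5: "t = 5" and ntb: "\<not> in_triangle M (fs ! 4)"
  shows "three_connected (contract (contract M (fs ! c)) (fs ! 4))"
proof -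
  let ?K = "{fs ! c, fs ! 4}"
  have n4: "4 \<le> (4::nat)" "4 < t" using t5 by auto
  note ab = index_pair_facts[OF c n4]
  have big: "3 \<le> card X" if s: "two_sep ?K X" for X
  proof (rule ccontr)
    assume "\<not> 3 \<le> card X"
    moreover have X: "X \<subseteq> E - ?K" "2 \<le> card X" using s unfolding two_sep_def by auto
    ultimately have "card X = 2" by simp
    then obtain y1 y2 where "X = {y1, y2}" "y1 \<noteq> y2" by (meson card_2_iff)
    moreover have "r (X \<union> ?K) \<le> 3" using two_sep_doubleton_card2_rank[OF ab(1,2,3) s \<open>card X = 2\<close>] .
    ultimately show False using no_small_side_len5[OF c nta t5 ntb, of y1 y2] X by auto
  qed
  have "\<not> two_sep ?K X" for X
    using no_two_sep_with_f5_big_sides[OF c nta _ big big[OF two_sep_compl]] ab t5 by force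
  then show ?thesis
    using three_connected_contract_contract_if_no_two_sep[OF ab(1,2,3) nta
        three_connected_contr_first[OF c nta]] by blast
qed

lemma si_three_connected_contract_contract_even:
  assumes c: "c < 3" and nta: "\<not> in_triangle M (fs ! c)"
    and n: "even n" "4 \<le> n" "n < t" and ntb: "\<not> in_triangle M (fs ! n)"
  shows "three_connected (si (contract (contract M (fs ! c)) (fs ! n)))"
proof (rule si_three_connected_contract_contract)
  let ?K = "{fs ! c, fs ! n}"
  note ab = index_pair_facts[OF c n(2,3)]
  show "fs ! c \<in> E" "fs ! n \<in> E" "fs ! c \<noteq> fs ! n" using ab by simp_all
  show "three_connected (contr {fs ! c})" by (rule three_connected_contr_first[OF c nta])
  fix X assume s: "two_sep ?K X" and rank: "4 \<le> r (X \<union> ?K)" "4 \<le> r (E - X)"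
  show False
  proof (cases "n = 4")
    case False
    then have "6 \<le> n" using n by presburger
    then show False using no_two_sep_ge6[OF c nta n(1) _ n(3) ntb] s by simp
  next
    case True
    have compl: "two_sep ?K (E - ?K - X)" using two_sep_compl[OF _ s] ab by simp
    have "(E - ?K - X) \<union> ?K = E - X" using s ab unfolding two_sep_def by auto
    then have "card X \<noteq> 2" "card (E - ?K - X) \<noteq> 2"
      using two_sep_doubleton_card2_rank[OF ab(1,2,3) s]
        two_sep_doubleton_card2_rank[OF ab(1,2,3) compl] rank by auto
    then have "3 \<le> card X" "3 \<le> card (E - ?K - X)" using s unfolding two_sep_def by auto
    then show False using no_two_sep_with_f5_big_sides[OF c nta] s True n by simp
  qed
qed (use nta in simp)

end

theorem lemma6p1:
  fixes M :: "'a matroid" and F :: "'a set" and fs :: "'a list" and i j :: nat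
  assumes "matroid M" and "three_connected M"
    and "maximal_flan M F" and "card F \<ge> 5" and "F \<noteq> gnd M"
    and "i \<in> {1, 2, 3}" and "odd j" and "5 \<le> j" and "j \<le> card F"
    and "flan_ordering M F fs"
    and "\<not> in_triangle M (fs ! (i - 1))" and "\<not> in_triangle M (fs ! (j - 1))"
  shows "three_connected (contract M (fs ! (i - 1))) \<and>
         three_connected (contract M (fs ! (j - 1))) \<and>
         three_connected (si (contract (contract M (fs ! (i - 1))) (fs ! (j - 1)))) \<and>
         (j \<ge> 7 \<longrightarrow> three_connected (contract (contract M (fs ! (i - 1))) (fs ! (j - 1)))) \<and>
         (card F = 5 \<longrightarrow> three_connected (contract (contract M (fs ! (i - 1))) (fs ! (j - 1))))"
proof -
  have "F \<subset> gnd M" using assms(5,10) unfolding flan_ordering_def by auto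
  then have "card F < card (gnd M)" by (rule psubset_card_mono[OF matroid_finite_gnd[OF assms(1)]])
  then have "6 \<le> card (gnd M)" using assms(4) by simp
  then interpret flan_setting M F fs
    by (intro flan_setting.intro tc_matroid.intro flan_setting_axioms.intro assms(1,2,3,5,10))
  define c n where "c = i - 1" "n = j - 1"
  have c: "c < 3" and n: "even n" "4 \<le> n" "n < t"
    using assms(6-9) card_F unfolding c_n_def by auto
  have nta: "\<not> in_triangle M (fs ! c)" and ntb: "\<not> in_triangle M (fs ! n)"
    using assms(11,12) unfolding c_n_def .
  have "three_connected (contract M (fs ! c))" "three_connected (contract M (fs ! n))"
    using three_connected_contr_first[OF c nta] three_connected_contr_even[OF n ntb]
    by (simp_all add: contract_eq_contr)
  moreover have "three_connected (si (contract (contract M (fs ! c)) (fs ! n)))"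
    by (rule si_three_connected_contract_contract_even[OF c nta n ntb])
  moreover have "j \<ge> 7 \<longrightarrow> three_connected (contract (contract M (fs ! c)) (fs ! n))"
    using three_connected_contract_contract_ge6[OF c nta n(1) _ n(3) ntb] unfolding c_n_def by simp
  moreover have "card F = 5 \<longrightarrow> three_connected (contract (contract M (fs ! c)) (fs ! n))"
  proof
    assume "card F = 5"
    then have "t = 5" "n = 4" using assms(8,9) card_F unfolding c_n_def by auto
    then show "three_connected (contract (contract M (fs ! c)) (fs ! n))"
      using three_connected_contract_contract_len5[OF c nta] ntb by simp
  qed
  ultimately show ?thesis unfolding c_n_def by blast
qed

end
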